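(* For all $v$ (for which the norms are defined), $$\alpha^{3/2}\|v\|_X\le\alpha\|v\|_{X^{(\mathbf{C})}}\le\|v\|_{X^{(\mathbf{C}^2)}}\le\|v\|_{X^{(\gamma\mathbf{C})}}\le\|v\|_{X^{(\gamma^2)}},$$ and therefore $X^{(\gamma^2)}\subset X^{(\gamma\mathbf{C})}\subset X^{(\mathbf{C}^2)}\subset X^{(\mathbf{C})}\subset X$, with dense embeddings.
   Context: $D\subset\mathbb{R}^d$ bounded open with smooth boundary; $\Gamma=\Gamma_{N_g}\otimes\Gamma_\nu$ a product probability measure on $\mathbb{R}^\mu=\mathbb{R}^{N_g}\times\mathbb{R}^\nu$, $E_\Gamma$ the integral with respect to $\Gamma$. $[\mathrm{C}]:D\times\mathbb{R}^\mu\to\mathbb{M}_n^+(\mathbb{R})$ is measurable (in the paper, the parameterized random field coefficient $\mathcal{K}^{(m,N)}(\mathbf{x},\mathbf{y},\mathcal{M}_{[a]}(\mathbf{z}))$), and there are a constant $\alpha>0$ and a positive measurable function $\gamma$ on $\mathbb{R}^\mu$ such that for $\Gamma$-a.e. $(\mathbf{y},\mathbf{z})$ and a.e. $\mathbf{x}$, all eigenvalues of $[\mathrm{C}](\mathbf{x},\mathbf{y},\mathbf{z})$ lie in $[\alpha,\gamma(\mathbf{y},\mathbf{z})]$, with $\gamma<\infty$. $X=H^1_0(D)\otimes L^2_\Gamma(\mathbb{R}^\mu)$ with norm $\|v\|_X^2=E_\Gamma(\int_D\|\nabla v\|_2^2d\mathbf{x})$. For integers $s,r\ge0$, $X^{(\gamma^s\mathbf{C}^r)}$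 is the space of functions $v:D\times\mathbb{R}^\mu\to\mathbb{R}$ with finite norm $\|v\|_{X^{(\gamma^s\mathbf{C}^r)}}=\{E_\Gamma(\gamma^s\int_D\nabla v\cdot[\mathrm{C}]^r\nabla v\,d\mathbf{x})\}^{1/2}$; e.g. $X^{(\mathbf{C})}$ ($s=0,r=1$), $X^{(\mathbf{C}^2)}$, $X^{(\gamma\mathbf{C})}$, $X^{(\gamma^2)}$ ($s=2,r=0$).
   Formalization: The lower eigenvalue bound $\alpha$ of [C] is also required to satisfy $\alpha \le 1$, besides $\alpha > 0$, for the whole inequality chain and the dense embeddings. The statement above fails without it. *)

theory Defs
  imports "HOL-Probability.Probability"
begin

definition testfn :: "(real^'d) set \<Rightarrow> (real^'d \<Rightarrow> real) \<Rightarrow> (real^'d \<Rightarrow> real^'d) \<Rightarrow> bool" where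
  "testfn D phi gphi \<longleftrightarrow>
     (\<forall>x. GDERIV phi x :> gphi x) \<and> continuous_on UNIV gphi \<and>
     compact (closure {x. phi x \<noteq> 0}) \<and> closure {x. phi x \<noteq> 0} \<subseteq> D"

definition weak_grad :: "(real^'d) set \<Rightarrow> (real^'d \<Rightarrow> real) \<Rightarrow> (real^'d \<Rightarrow> real^'d) \<Rightarrow> bool" where
  "weak_grad D f g \<longleftrightarrow>
     (\<forall>phi gphi. testfn D phi gphi \<longrightarrow>
        (\<forall>i. (LINT x:D|lborel. f x * (gphi x $ i)) = - (LINT x:D|lborel. (g x $ i) * phi x)))"

definition H1 :: "(real^'d) set \<Rightarrow> (real^'d \<Rightarrow> real) \<Rightarrow> (real^'d \<Rightarrow> real^'d) \<Rightarrow> bool" where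
  "H1 D f g \<longleftrightarrow> f \<in> borel_measurable lborel \<and> g \<in> borel_measurable lborel \<and>
     set_integrable lborel D (\<lambda>x. (f x)\<^sup>2) \<and> set_integrable lborel D (\<lambda>x. (norm (g x))\<^sup>2) \<and>
     weak_grad D f g"

text \<open>The weak gradient of f (unique a.e. when it exists).\<close>
definition grad :: "(real^'d) set \<Rightarrow> (real^'d \<Rightarrow> real) \<Rightarrow> real^'d \<Rightarrow> real^'d" where
  "grad D f = (SOME g. H1 D f g)"

definition H10 :: "(real^'d) set \<Rightarrow> (real^'d \<Rightarrow> real) \<Rightarrow> bool" where
  "H10 D f \<longleftrightarrow> (\<exists>g. H1 D f g \<and>
     (\<exists>phis gphis. (\<forall>k. testfn D (phis k) (gphis k)) \<and>
        (\<lambda>k. LINT x:D|lborel. (phis k x - f x)\<^sup>2 + (norm (gphis k x - g x))\<^sup>2)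
          \<longlonglongrightarrow> 0))"

primrec mpow :: "real^'n^'n \<Rightarrow> nat \<Rightarrow> real^'n^'n" where
  "mpow A 0 = mat 1"
| "mpow A (Suc r) = A ** mpow A r"

definition is_eigenvalue :: "real^'n^'n \<Rightarrow> real \<Rightarrow> bool" where
  "is_eigenvalue A l \<longleftrightarrow> (\<exists>x. x \<noteq> 0 \<and> A *v x = l *\<^sub>R x)"

definition sym_posdef :: "real^'n^'n \<Rightarrow> bool" where
  "sym_posdef A \<longleftrightarrow> transpose A = A \<and> (\<forall>x. x \<noteq> 0 \<longrightarrow> x \<bullet> (A *v x) > 0)"

text \<open>v : D x R^mu -> R "for which the norms are defined": jointly measurable, and for
  Gamma-a.e. w, v(.,w) in H^1_0(D) with a jointly measurable weak gradient field.\<close>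
definition admissible :: "(real^'d) set \<Rightarrow> 'w measure \<Rightarrow> (real^'d \<Rightarrow> 'w \<Rightarrow> real) \<Rightarrow> bool" where
  "admissible D Gam v \<longleftrightarrow>
     (\<lambda>(x, w). v x w) \<in> borel_measurable (lborel \<Otimes>\<^sub>M Gam) \<and>
     (\<exists>G. (\<lambda>(x, w). G x w) \<in> borel_measurable (lborel \<Otimes>\<^sub>M Gam) \<and>
          (AE w in Gam. H10 D (\<lambda>x. v x w) \<and> H1 D (\<lambda>x. v x w) (\<lambda>x. G x w)))"

definition Xsq :: "(real^'d) set \<Rightarrow> 'w measure \<Rightarrow> (real^'d \<Rightarrow> 'w \<Rightarrow> real^'d^'d) \<Rightarrow> ('w \<Rightarrow> real)
    \<Rightarrow> nat \<Rightarrow> nat \<Rightarrow> (real^'d \<Rightarrow> 'w \<Rightarrow> real) \<Rightarrow> ennreal" where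
  "Xsq D Gam C gam s r v =
     (\<integral>\<^sup>+ w. ennreal (gam w ^ s) *
        (\<integral>\<^sup>+ x\<in>D. ennreal (grad D (\<lambda>x. v x w) x \<bullet> (mpow (C x w) r *v grad D (\<lambda>x. v x w) x)) \<partial>lborel)
      \<partial>Gam)"

definition Xnorm :: "(real^'d) set \<Rightarrow> 'w measure \<Rightarrow> (real^'d \<Rightarrow> 'w \<Rightarrow> real^'d^'d) \<Rightarrow> ('w \<Rightarrow> real)
    \<Rightarrow> nat \<Rightarrow> nat \<Rightarrow> (real^'d \<Rightarrow> 'w \<Rightarrow> real) \<Rightarrow> ennreal" where
  "Xnorm D Gam C gam s r v =
     (if Xsq D Gam C gam s r v = \<infinity> then \<infinity> else ennreal (sqrt (enn2real (Xsq D Gam C gam s r v))))"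

definition Xspace :: "(real^'d) set \<Rightarrow> 'w measure \<Rightarrow> (real^'d \<Rightarrow> 'w \<Rightarrow> real^'d^'d) \<Rightarrow> ('w \<Rightarrow> real)
    \<Rightarrow> nat \<Rightarrow> nat \<Rightarrow> (real^'d \<Rightarrow> 'w \<Rightarrow> real) set" where
  "Xspace D Gam C gam s r = {v. admissible D Gam v \<and> Xnorm D Gam C gam s r v < \<infinity>}"

definition dense_embedded :: "(real^'d) set \<Rightarrow> 'w measure \<Rightarrow> (real^'d \<Rightarrow> 'w \<Rightarrow> real^'d^'d) \<Rightarrow> ('w \<Rightarrow> real)
    \<Rightarrow> (real^'d \<Rightarrow> 'w \<Rightarrow> real) set \<Rightarrow> nat \<Rightarrow> nat \<Rightarrow> bool" where
  "dense_embedded D Gam C gam A s r \<longleftrightarrow>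
     A \<subseteq> Xspace D Gam C gam s r \<and>
     (\<forall>v \<in> Xspace D Gam C gam s r. \<forall>e>0. \<exists>u\<in>A.
        Xnorm D Gam C gam s r (\<lambda>x w. v x w - u x w) < ennreal e)"

end

theory Submission
  imports Defs
begin

text \<open>
  For a symmetric matrix \<open>A\<close> with spectrum in \<open>[\<alpha>, \<gamma>]\<close> one has \<open>\<alpha> |y|\<^sup>2 \<le> y\<cdot>Ay \<le> \<gamma> |y|\<^sup>2\<close>
  (Rayleigh) and \<open>\<alpha> y\<cdot>Ay \<le> |Ay|\<^sup>2 \<le> \<gamma> y\<cdot>Ay\<close>; taking \<open>y = A^k x\<close> gives
  \<open>\<alpha> x\<cdot>A^r x \<le> x\<cdot>A^(r+1) x \<le> \<gamma> x\<cdot>A^r x\<close> for every \<open>r\<close>. Multiplying by powers of \<open>\<gamma>\<close> and \<open>\<alpha>\<close>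
  and integrating over \<open>D\<close> and the parameter space yields the chain of norm inequalities, hence the
  inclusions. For density, cut \<open>v\<close> off to the parameters with \<open>\<gamma> \<le> n\<close>: there the integrand of the
  stronger norm is at most \<open>n/\<alpha>\<close> times that of the weaker one, so the cut-off function lies in the
  smaller space, while the remainder lives on \<open>{\<gamma> > n}\<close> and its norm tends to \<open>0\<close> by monotone
  convergence.
\<close>


section \<open>Quadratic forms of symmetric matrices\<close>

lemma inner_matrix_vector_symmetric:
  fixes A :: "real^'n^'n"
  assumes "transpose A = A"
  shows "x \<bullet> (A *v y) = (A *v x) \<bullet> y"
  by (metis assms dot_lmul_matrix transpose_matrix_vector)

lemma rayleigh_minimizer_is_eigenvector:
  fixes A :: "real^'n^'n"
  assumes sym: "transpose A = A" and lower: "\<And>y. m * (y \<bullet> y) \<le> y \<bullet> (A *v y)"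
    and attained: "x \<bullet> (A *v x) = m * (x \<bullet> x)"
  shows "A *v x = m *\<^sub>R x"
proof -
  define y where "y = A *v x - m *\<^sub>R x"
  define N where "N = y \<bullet> y"
  define c where "c = y \<bullet> (A *v y) - m * (y \<bullet> y)"
  have expand: "(x + t *\<^sub>R y) \<bullet> (A *v (x + t *\<^sub>R y)) - m * ((x + t *\<^sub>R y) \<bullet> (x + t *\<^sub>R y))
      = 2 * t * N + t^2 * c" for t
    using attained inner_matrix_vector_symmetric[OF sym, of y x]
    by (simp add: N_def c_def y_def matrix_vector_right_distrib matrix_vector_mult_scaleR
        inner_add_left inner_add_right inner_diff_left inner_diff_right inner_commute
        power2_eq_square algebra_simps)
  \<comment> \<open>\<open>t \<mapsto> 2tN + t\<^sup>2c\<close> is nonnegative by \<open>lower\<close>, which forces \<open>N = 0\<close>\<close>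
  have "N = 0"
  proof (rule ccontr)
    assume "N \<noteq> 0"
    then have "0 < N" by (simp add: N_def)
    have "0 \<le> c" using lower[of y] by (simp add: c_def)
    define t where "t = - N / (c + 2)"
    have "t < 0" using \<open>0 < N\<close> \<open>0 \<le> c\<close> by (simp add: t_def)
    have "c * t = - N - 2 * t" using \<open>0 \<le> c\<close> by (simp add: t_def field_simps)
    have "2 * t * N + t^2 * c = t * (c * t) + 2 * t * N"
      by (simp add: power2_eq_square algebra_simps)
    also have "\<dots> = t * (N - 2 * t)"
      unfolding \<open>c * t = - N - 2 * t\<close> by (simp add: algebra_simps)
    also have "\<dots> < 0" using \<open>t < 0\<close> \<open>0 < N\<close> by (simp add: mult_neg_pos)
    finally have "2 * t * N + t^2 * c < 0" .
    with expand[of t] lower[of "x + t *\<^sub>R y"] show False by linarith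
  qed
  then show ?thesis by (simp add: N_def y_def)
qed

lemma symmetric_matrix_min_eigenvalue:
  fixes A :: "real^'n^'n"
  assumes sym: "transpose A = A"
  obtains m where "is_eigenvalue A m" and "\<And>x. m * (x \<bullet> x) \<le> x \<bullet> (A *v x)"
proof -
  let ?q = "\<lambda>x. x \<bullet> (A *v x)"
  have "continuous_on UNIV ?q"
    by (intro continuous_intros linear_continuous_on matrix_vector_mul_linear)
  then obtain x0 where x0: "x0 \<in> sphere 0 1" and min: "\<And>y. y \<in> sphere 0 1 \<Longrightarrow> ?q x0 \<le> ?q y"
    using continuous_attains_inf[of "sphere 0 1" ?q] continuous_on_subset by force
  define m where "m = ?q x0"
  have lower: "m * (y \<bullet> y) \<le> ?q y" for y
  proof (cases "y = 0")
    case False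
    have "(1 / norm y) *\<^sub>R y \<in> sphere 0 1" using False by simp
    then have "m \<le> ?q ((1 / norm y) *\<^sub>R y)" unfolding m_def by (rule min)
    also have "\<dots> = ?q y / (norm y)^2"
      by (simp add: matrix_vector_mult_scaleR power2_eq_square)
    finally show ?thesis using False by (simp add: field_simps dot_square_norm)
  qed simp
  have "A *v x0 = m *\<^sub>R x0"
    using x0 by (intro rayleigh_minimizer_is_eigenvector[OF sym lower]) (simp add: m_def dot_square_norm)
  then have "is_eigenvalue A m"
    using x0 unfolding is_eigenvalue_def by (intro exI[of _ x0]) auto
  then show ?thesis using lower by (rule that)
qed

lemma quadratic_form_ge_eigenvalue_bound:
  fixes A :: "real^'n^'n"
  assumes "transpose A = A" and "\<And>l. is_eigenvalue A l \<Longrightarrow> a \<le> l"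
  shows "a * (x \<bullet> x) \<le> x \<bullet> (A *v x)"
proof -
  obtain m where "is_eigenvalue A m" and "\<And>x. m * (x \<bullet> x) \<le> x \<bullet> (A *v x)"
    using symmetric_matrix_min_eigenvalue[OF assms(1)] by blast
  then show ?thesis using assms(2) by (meson inner_ge_zero mult_right_mono order_trans)
qed

lemma quadratic_form_le_eigenvalue_bound:
  fixes A :: "real^'n^'n"
  assumes sym: "transpose A = A" and ev: "\<And>l. is_eigenvalue A l \<Longrightarrow> l \<le> g"
  shows "x \<bullet> (A *v x) \<le> g * (x \<bullet> x)"
proof -
  have neg: "(- A) *v y = - (A *v y)" for y
    by (simp add: matrix_vector_mult_def vec_eq_iff sum_negf)
  have "- g * (x \<bullet> x) \<le> x \<bullet> ((- A) *v x)"
  proof (rule quadratic_form_ge_eigenvalue_bound)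
    show "transpose (- A) = - A" using sym by (simp add: transpose_def vec_eq_iff)
    show "- g \<le> l" if "is_eigenvalue (- A) l" for l
    proof -
      have "is_eigenvalue A (- l)"
        using that unfolding is_eigenvalue_def neg by (metis minus_equation_iff scaleR_minus_left)
      then show ?thesis using ev by fastforce
    qed
  qed
  then show ?thesis by (simp add: neg)
qed

definition eigenvalues_between :: "real^'n^'n \<Rightarrow> real \<Rightarrow> real \<Rightarrow> bool" where
  "eigenvalues_between A a g \<longleftrightarrow> transpose A = A \<and> (\<forall>l. is_eigenvalue A l \<longrightarrow> a \<le> l \<and> l \<le> g)"

lemma eigenvalues_betweenD:
  assumes "eigenvalues_between A a g"
  shows "transpose A = A" and "\<And>l. is_eigenvalue A l \<Longrightarrow> a \<le> l" and "\<And>l. is_eigenvalue A l \<Longrightarrow> l \<le> g"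
  using assms by (simp_all add: eigenvalues_between_def)

lemma eigenvalues_between_le:
  assumes "eigenvalues_between A a g"
  shows "a \<le> g"
  using symmetric_matrix_min_eigenvalue[OF eigenvalues_betweenD(1)[OF assms]] eigenvalues_betweenD[OF assms]
  by (meson order_trans)

lemma matrix_vector_sq_norm_bounds:
  fixes A :: "real^'n^'n"
  assumes A: "eigenvalues_between A a g" and "0 < a"
  shows "a * (x \<bullet> (A *v x)) \<le> (A *v x) \<bullet> (A *v x)"
    and "(A *v x) \<bullet> (A *v x) \<le> g * (x \<bullet> (A *v x))"
proof -
  let ?y = "A *v x"
  note sym = eigenvalues_betweenD(1)[OF A]
  have lower: "a * (y \<bullet> y) \<le> y \<bullet> (A *v y)" for y
    using quadratic_form_ge_eigenvalue_bound[OF sym eigenvalues_betweenD(2)[OF A]] .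
  have upper: "y \<bullet> (A *v y) \<le> g * (y \<bullet> y)" for y
    using quadratic_form_le_eigenvalue_bound[OF sym eigenvalues_betweenD(3)[OF A]] .
  have psd: "0 \<le> y \<bullet> (A *v y)" for y
    using lower[of y] \<open>0 < a\<close> by (meson inner_ge_zero mult_nonneg_nonneg order_trans less_imp_le)
  \<comment> \<open>\<open>|Ax|\<^sup>2 - a x\<cdot>Ax = |Ax - a x|\<^sup>2 + a (x\<cdot>Ax - a |x|\<^sup>2)\<close>\<close>
  have "?y \<bullet> ?y - a * (x \<bullet> ?y) = (?y - a *\<^sub>R x) \<bullet> (?y - a *\<^sub>R x) + a * (x \<bullet> ?y - a * (x \<bullet> x))"
    by (simp add: inner_diff_left inner_diff_right inner_commute algebra_simps)
  moreover have "0 \<le> a * (x \<bullet> ?y - a * (x \<bullet> x))" using lower[of x] \<open>0 < a\<close> by simp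
  ultimately show "a * (x \<bullet> ?y) \<le> ?y \<bullet> ?y" by (smt (verit) inner_ge_zero)
  have "0 < g" using eigenvalues_between_le[OF A] \<open>0 < a\<close> by linarith
  \<comment> \<open>positivity of the form at \<open>x - Ax / g\<close>\<close>
  let ?t = "- 1 / g"
  have "0 \<le> (x + ?t *\<^sub>R ?y) \<bullet> (A *v (x + ?t *\<^sub>R ?y))" by (rule psd)
  also have "\<dots> = x \<bullet> ?y + 2 * ?t * (?y \<bullet> ?y) + ?t^2 * (?y \<bullet> (A *v ?y))"
    using inner_matrix_vector_symmetric[OF sym, of ?y x]
    by (simp add: matrix_vector_right_distrib matrix_vector_mult_scaleR inner_add_left inner_add_right
        power2_eq_square algebra_simps inner_commute)
  also have "\<dots> \<le> x \<bullet> ?y + 2 * ?t * (?y \<bullet> ?y) + ?t^2 * (g * (?y \<bullet> ?y))"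
    using upper[of ?y] by (simp add: mult_left_mono)
  also have "\<dots> = x \<bullet> ?y - (?y \<bullet> ?y) / g" using \<open>0 < g\<close> by (simp add: field_simps power2_eq_square)
  finally show "?y \<bullet> ?y \<le> g * (x \<bullet> ?y)" using \<open>0 < g\<close> by (simp add: field_simps)
qed

lemma mpow_add: "mpow A (m + n) = mpow A m ** mpow A n"
  by (induction m) (simp_all add: matrix_mul_assoc)

lemma transpose_mpow:
  assumes "transpose A = A"
  shows "transpose (mpow A r) = mpow A r"
proof (induction r)
  case (Suc r)
  have "transpose (mpow A (Suc r)) = mpow A r ** A"
    using Suc assms by (simp add: matrix_transpose_mul)
  also have "\<dots> = mpow A (r + 1)" by (simp only: mpow_add) simp
  finally show ?case by simp
qed simp

lemma quadratic_form_mpow_even: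
  fixes A :: "real^'n^'n"
  assumes "transpose A = A"
  shows "x \<bullet> (mpow A (k + k) *v x) = (mpow A k *v x) \<bullet> (mpow A k *v x)"
  using inner_matrix_vector_symmetric[OF transpose_mpow[OF assms]]
  by (simp add: mpow_add matrix_vector_mul_assoc[symmetric])

lemma quadratic_form_mpow_odd:
  fixes A :: "real^'n^'n"
  assumes "transpose A = A"
  shows "x \<bullet> (mpow A (Suc (k + k)) *v x) = (mpow A k *v x) \<bullet> (A *v (mpow A k *v x))"
proof -
  have "mpow A (Suc (k + k)) = mpow A k ** (A ** mpow A k)"
    by (metis add_Suc_right mpow.simps(2) mpow_add)
  then show ?thesis
    using inner_matrix_vector_symmetric[OF transpose_mpow[OF assms]]
    by (simp add: matrix_vector_mul_assoc[symmetric])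
qed

lemma quadratic_form_mpow_Suc_bounds:
  fixes A :: "real^'n^'n"
  assumes A: "eigenvalues_between A a g" and "0 < a"
  shows "a * (x \<bullet> (mpow A r *v x)) \<le> x \<bullet> (mpow A (Suc r) *v x)"
    and "x \<bullet> (mpow A (Suc r) *v x) \<le> g * (x \<bullet> (mpow A r *v x))"
proof -
  note sym = eigenvalues_betweenD(1)[OF A]
  have "\<exists>k. r = k + k \<or> r = Suc (k + k)" by presburger
  then obtain k where "r = k + k \<or> r = Suc (k + k)" by blast
  then have "a * (x \<bullet> (mpow A r *v x)) \<le> x \<bullet> (mpow A (Suc r) *v x)
      \<and> x \<bullet> (mpow A (Suc r) *v x) \<le> g * (x \<bullet> (mpow A r *v x))"
  proof
    assume r: "r = k + k"
    show ?thesis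
      unfolding r quadratic_form_mpow_even[OF sym] quadratic_form_mpow_odd[OF sym]
      using quadratic_form_ge_eigenvalue_bound[OF sym eigenvalues_betweenD(2)[OF A]]
        quadratic_form_le_eigenvalue_bound[OF sym eigenvalues_betweenD(3)[OF A]]
      by simp
  next
    assume r: "r = Suc (k + k)"
    let ?y = "mpow A k *v x"
    have "x \<bullet> (mpow A (Suc r) *v x) = (A *v ?y) \<bullet> (A *v ?y)"
      using quadratic_form_mpow_even[OF sym, of x "Suc k"] r by (simp add: matrix_vector_mul_assoc)
    moreover have "x \<bullet> (mpow A r *v x) = ?y \<bullet> (A *v ?y)"
      unfolding r by (rule quadratic_form_mpow_odd[OF sym])
    ultimately show ?thesis using matrix_vector_sq_norm_bounds[OF A \<open>0 < a\<close>, of ?y] by simp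
  qed
  then show "a * (x \<bullet> (mpow A r *v x)) \<le> x \<bullet> (mpow A (Suc r) *v x)"
    and "x \<bullet> (mpow A (Suc r) *v x) \<le> g * (x \<bullet> (mpow A r *v x))" by blast+
qed

lemma quadratic_form_mpow_nonneg:
  fixes A :: "real^'n^'n"
  assumes "eigenvalues_between A a g" and "0 < a"
  shows "0 \<le> x \<bullet> (mpow A r *v x)"
proof (induction r)
  case (Suc r)
  then show ?case
    using quadratic_form_mpow_Suc_bounds(1)[OF assms, of x r] \<open>0 < a\<close>
    by (meson mult_nonneg_nonneg less_imp_le order_trans)
qed simp

section \<open>Uniqueness of weak gradients\<close>

definition ramp_sq :: "real \<Rightarrow> real" where "ramp_sq u = (max 0 u)^2"

lemma ramp_sq_pos: "0 < u \<Longrightarrow> ramp_sq u = u^2" by (simp add: ramp_sq_def)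
lemma ramp_sq_nonpos: "u \<le> 0 \<Longrightarrow> ramp_sq u = 0" by (simp add: ramp_sq_def)

lemma DERIV_ramp_sq: "(ramp_sq has_real_derivative 2 * max 0 u) (at u)"
proof -
  consider "u > 0" | "u < 0" | "u = 0" by linarith
  then show ?thesis
  proof cases
    case 1
    have d: "((\<lambda>u. u^2) has_real_derivative 2 * u) (at u)"
      using DERIV_pow[of 2 u] by simp
    show ?thesis
    proof (rule has_field_derivative_transform_within_open[where S="{0<..}" and f="\<lambda>u. u^2"])
      show "((\<lambda>u. u^2) has_real_derivative 2 * max 0 u) (at u)" using d 1 by simp
      show "x \<in> {0<..} \<Longrightarrow> x^2 = ramp_sq x" for x by (simp add: ramp_sq_pos)
    qed (use 1 in auto)
  next
    case 2
    show ?thesis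
    proof (rule has_field_derivative_transform_within_open[where S="{..<0}" and f="\<lambda>u. 0"])
      show "((\<lambda>u. 0) has_real_derivative 2 * max 0 u) (at u)" using 2 by simp
      show "x \<in> {..<0} \<Longrightarrow> 0 = ramp_sq x" for x by (simp add: ramp_sq_nonpos)
    qed (use 2 in auto)
  next
    case 3
    have "((\<lambda>y. max 0 y) \<longlongrightarrow> max 0 0) (at (0::real))"
      by (intro tendsto_intros)
    moreover have "\<forall>\<^sub>F y in at 0. max 0 y = (ramp_sq y - ramp_sq 0) / (y - 0)"
      by (auto simp: eventually_at_filter ramp_sq_def max_def power2_eq_square)
    ultimately have "((\<lambda>y. (ramp_sq y - ramp_sq 0) / (y - 0)) \<longlongrightarrow> 0) (at 0)"
      by (simp add: tendsto_cong)
    then show ?thesis using 3 by (simp add: has_field_derivative_iff)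
  qed
qed

lemma ramp_sq_nonneg: "0 \<le> ramp_sq u" by (simp add: ramp_sq_def)
lemma ramp_sq_pos_iff: "0 < ramp_sq u \<longleftrightarrow> 0 < u" by (auto simp: ramp_sq_def max_def)
lemma continuous_on_ramp_sq[continuous_intros]: "continuous_on S f \<Longrightarrow> continuous_on S (\<lambda>x. ramp_sq (f x))"
  unfolding ramp_sq_def by (intro continuous_intros)

text \<open>\<open>ramp_sq\<close> is \<open>C\<^sup>1\<close>, so \<open>box_bump a b\<close> is a \<open>C\<^sup>1\<close> function that is positive exactly on \<open>box a b\<close>;
  the cutoffs \<open>k Q / (1 + k Q)\<close> built from it are test functions increasing to the indicator of the box.\<close>

definition box_factor :: "real^'d \<Rightarrow> real^'d \<Rightarrow> 'd \<Rightarrow> real^'d \<Rightarrow> real" where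
  "box_factor a b i x = (x$i - a$i) * (b$i - x$i)"

definition box_bump :: "real^'d \<Rightarrow> real^'d \<Rightarrow> real^'d \<Rightarrow> real" where
  "box_bump a b x = (\<Prod>i\<in>UNIV. ramp_sq (box_factor a b i x))"

definition box_bump_grad :: "real^'d \<Rightarrow> real^'d \<Rightarrow> real^'d \<Rightarrow> real^'d" where
  "box_bump_grad a b x = (\<Sum>i\<in>UNIV. ((\<Prod>j\<in>UNIV - {i}. ramp_sq (box_factor a b j x)) *
       (2 * max 0 (box_factor a b i x) * (a$i + b$i - 2 * x$i))) *\<^sub>R axis i 1)"

lemma continuous_on_box_factor[continuous_intros]: "continuous_on S (box_factor a b i)"
  unfolding box_factor_def by (intro continuous_intros)

lemma box_bump_has_gradient: "GDERIV (box_bump a b) x :> box_bump_grad a b x"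
proof -
  have pbd: "(box_factor a b i has_derivative (\<lambda>h. h$i * (a$i + b$i - 2 * x$i))) (at x)" for i
  proof -
    have d1: "((\<lambda>y. y$i) has_derivative (\<lambda>h. h$i)) (at x)"
      by (rule bounded_linear_imp_has_derivative[OF bounded_linear_vec_nth])
    have "((\<lambda>y. (y$i - a$i) * (b$i - y$i)) has_derivative
        (\<lambda>h. (x$i - a$i) * (0 - h$i) + (h$i - 0) * (b$i - x$i))) (at x)"
      by (rule has_derivative_mult[OF has_derivative_diff[OF d1 has_derivative_const]
            has_derivative_diff[OF has_derivative_const d1]])
    then show ?thesis unfolding box_factor_def
      by (rule has_derivative_eq_rhs) (simp add: fun_eq_iff algebra_simps)
  qed
  have qd: "((\<lambda>x. ramp_sq (box_factor a b i x)) has_derivative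
       (\<lambda>h. h$i * (a$i + b$i - 2 * x$i) * (2 * max 0 (box_factor a b i x)))) (at x)" for i
  proof -
    have "((\<lambda>x. ramp_sq (box_factor a b i x)) has_derivative (\<lambda>h. (2 * max 0 (box_factor a b i x)) * (h$i * (a$i + b$i - 2 * x$i)))) (at x)"
      using has_derivative_compose[OF pbd[of i] DERIV_ramp_sq[of "box_factor a b i x", unfolded has_field_derivative_def]]
      by (simp add: o_def)
    then show ?thesis by (simp add: ac_simps)
  qed
  have "(box_bump a b has_derivative (\<lambda>y. \<Sum>i\<in>UNIV. y$i * (a$i + b$i - 2 * x$i) * (2 * max 0 (box_factor a b i x))
           * (\<Prod>j\<in>UNIV - {i}. ramp_sq (box_factor a b j x)))) (at x)"
    unfolding box_bump_def by (rule has_derivative_prod) (rule qd)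
  moreover have "(\<lambda>y. \<Sum>i\<in>UNIV. y$i * (a$i + b$i - 2 * x$i) * (2 * max 0 (box_factor a b i x))
           * (\<Prod>j\<in>UNIV - {i}. ramp_sq (box_factor a b j x))) = (\<lambda>h. h \<bullet> box_bump_grad a b x)"
    by (rule ext) (simp add: box_bump_grad_def inner_sum_right inner_axis ac_simps)
  ultimately show ?thesis unfolding gderiv_def by simp
qed

lemma box_bump_nonneg: "0 \<le> box_bump a b x"
  unfolding box_bump_def by (intro prod_nonneg) (simp add: ramp_sq_nonneg)

lemma box_bump_pos_iff:
  assumes "\<forall>i. a$i < b$i"
  shows "0 < box_bump a b x \<longleftrightarrow> x \<in> box a b"
proof -
  have "0 < box_bump a b x \<longleftrightarrow> (\<forall>i. ramp_sq (box_factor a b i x) \<noteq> 0)"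
    using box_bump_nonneg[of a b x] by (simp add: box_bump_def less_le)
  also have "\<dots> \<longleftrightarrow> (\<forall>i. 0 < box_factor a b i x)"
    using ramp_sq_nonneg ramp_sq_pos_iff by (metis less_le)
  also have "\<dots> \<longleftrightarrow> x \<in> box a b"
  proof -
    have "0 < box_factor a b i x \<longleftrightarrow> a$i < x$i \<and> x$i < b$i" for i
      using assms[rule_format, of i] by (auto simp: box_factor_def zero_less_mult_iff)
    then show ?thesis by (simp add: mem_box_cart)
  qed
  finally show ?thesis .
qed

definition box_cutoff :: "real^'d \<Rightarrow> real^'d \<Rightarrow> nat \<Rightarrow> real^'d \<Rightarrow> real" where
  "box_cutoff a b k x = real k * box_bump a b x / (1 + real k * box_bump a b x)"

definition box_cutoff_grad :: "real^'d \<Rightarrow> real^'d \<Rightarrow> nat \<Rightarrow> real^'d \<Rightarrow> real^'d" where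
  "box_cutoff_grad a b k x = (real k / (1 + real k * box_bump a b x)^2) *\<^sub>R box_bump_grad a b x"

lemma continuous_on_box_bump[continuous_intros]: "continuous_on S (box_bump a b)"
  unfolding box_bump_def by (intro continuous_intros)

lemma continuous_on_box_bump_grad: "continuous_on S (box_bump_grad a b)"
  unfolding box_bump_grad_def by (intro continuous_intros)

lemma box_cutoff_denominator_pos: "0 < 1 + real k * box_bump a b x"
  using box_bump_nonneg[of a b x] by (smt (verit) of_nat_0_le_iff mult_nonneg_nonneg)

lemma box_cutoff_has_gradient: "GDERIV (box_cutoff a b k) x :> box_cutoff_grad a b k x"
proof -
  have "DERIV (\<lambda>s. real k * s / (1 + real k * s)) (box_bump a b x) :> real k / (1 + real k * box_bump a b x)^2"
    using box_cutoff_denominator_pos[of k a b x]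
    by (auto intro!: derivative_eq_intros simp: field_simps power2_eq_square)
  from GDERIV_DERIV_compose[OF box_bump_has_gradient this] show ?thesis
    unfolding box_cutoff_def box_cutoff_grad_def by simp
qed

lemma continuous_on_box_cutoff: "continuous_on S (box_cutoff a b k)"
  unfolding box_cutoff_def
  by (intro continuous_intros) (metis box_cutoff_denominator_pos less_irrefl)

lemma continuous_on_box_cutoff_grad: "continuous_on S (box_cutoff_grad a b k)"
  unfolding box_cutoff_grad_def
  by (intro continuous_intros continuous_on_box_bump_grad) (metis box_cutoff_denominator_pos less_irrefl zero_less_power)

lemma box_cutoff_support:
  assumes "\<forall>i. a$i < b$i"
  shows "{x. box_cutoff a b k x \<noteq> 0} \<subseteq> box a b"
proof
  fix x assume "x \<in> {x. box_cutoff a b k x \<noteq> 0}"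
  then have "box_bump a b x \<noteq> 0" by (auto simp: box_cutoff_def)
  then have "0 < box_bump a b x" using box_bump_nonneg[of a b x] by linarith
  then show "x \<in> box a b" using box_bump_pos_iff[OF assms] by simp
qed

lemma testfn_box_cutoff:
  assumes "\<forall>i. a$i < b$i" and "cbox a b \<subseteq> D"
  shows "testfn D (box_cutoff a b k) (box_cutoff_grad a b k)"
proof -
  have "{x. box_cutoff a b k x \<noteq> 0} \<subseteq> cbox a b"
    using box_cutoff_support[OF assms(1), of k] box_subset_cbox[of a b] by blast
  then have cl: "closure {x. box_cutoff a b k x \<noteq> 0} \<subseteq> cbox a b"
    by (rule closure_minimal) (rule closed_cbox)
  have "bounded {x. box_cutoff a b k x \<noteq> 0}"
    using box_cutoff_support[OF assms(1)] bounded_box bounded_subset by blast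
  then have cp: "compact (closure {x. box_cutoff a b k x \<noteq> 0})" by (simp add: compact_closure)
  show ?thesis unfolding testfn_def
  proof (intro conjI allI)
    show "GDERIV (box_cutoff a b k) x :> box_cutoff_grad a b k x" for x by (rule box_cutoff_has_gradient)
    show "continuous_on UNIV (box_cutoff_grad a b k)" by (rule continuous_on_box_cutoff_grad)
    show "compact (closure {x. box_cutoff a b k x \<noteq> 0})" by (rule cp)
    show "closure {x. box_cutoff a b k x \<noteq> 0} \<subseteq> D" using cl assms(2) by (rule order_trans)
  qed
qed

lemma abs_box_cutoff_le_1: "\<bar>box_cutoff a b k x\<bar> \<le> 1"
proof -
  have n: "0 \<le> real k * box_bump a b x" using box_bump_nonneg[of a b x] by simp
  have d: "0 < 1 + real k * box_bump a b x" by (rule box_cutoff_denominator_pos)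
  have "real k * box_bump a b x / (1 + real k * box_bump a b x) \<le> 1" using d by (simp add: divide_le_eq)
  moreover have "0 \<le> real k * box_bump a b x / (1 + real k * box_bump a b x)" using n d by simp
  ultimately show ?thesis unfolding box_cutoff_def by (metis abs_of_nonneg)
qed

lemma box_cutoff_tendsto_indicator:
  assumes "\<forall>i. a$i < b$i"
  shows "(\<lambda>k. box_cutoff a b k x) \<longlonglongrightarrow> indicator (box a b) x"
proof (cases "x \<in> box a b")
  case True
  then have q: "0 < box_bump a b x" using box_bump_pos_iff[OF assms] by simp
  have eq: "box_cutoff a b k x = 1 - 1 / (1 + real k * box_bump a b x)" for k
    using box_cutoff_denominator_pos[of k a b x] by (simp add: box_cutoff_def field_simps)
  have "(\<lambda>k. 1 / (1 + real k * box_bump a b x)) \<longlonglongrightarrow> 0"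
  proof (rule tendsto_divide_0[OF tendsto_const])
    have "LIM k sequentially. real k * box_bump a b x :> at_top"
      by (rule filterlim_at_top_mult_tendsto_pos[OF tendsto_const q filterlim_real_sequentially])
    then have "LIM k sequentially. 1 + real k * box_bump a b x :> at_top"
      by (rule filterlim_tendsto_add_at_top[OF tendsto_const])
    then show "filterlim (\<lambda>k. 1 + real k * box_bump a b x) at_infinity sequentially"
      by (rule filterlim_at_top_imp_at_infinity)
  qed
  then have "(\<lambda>k. 1 - 1 / (1 + real k * box_bump a b x)) \<longlonglongrightarrow> 1 - 0"
    by (intro tendsto_intros)
  then show ?thesis using True by (simp add: eq)
next
  case False
  then have "\<not> 0 < box_bump a b x" using box_bump_pos_iff[OF assms] by simp
  then have "box_bump a b x = 0" using box_bump_nonneg[of a b x] by linarith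
  then show ?thesis using False by (simp add: box_cutoff_def)
qed

lemma set_integral_box_cutoff_tendsto:
  fixes h :: "real^'d \<Rightarrow> real"
  assumes hm: "h \<in> borel_measurable lborel" and hi: "set_integrable lborel D h"
    and Dm: "D \<in> sets lborel" and ab: "\<forall>i. a$i < b$i" and sub: "box a b \<subseteq> D"
  shows "(\<lambda>k. LINT x:D|lborel. h x * box_cutoff a b k x) \<longlonglongrightarrow> (LINT x:box a b|lborel. h x)"
  unfolding set_lebesgue_integral_def
proof (rule integral_dominated_convergence)
  show "(\<lambda>x. indicator (box a b) x *\<^sub>R h x) \<in> borel_measurable lborel" using hm by simp
  show "(\<lambda>x. indicator D x *\<^sub>R (h x * box_cutoff a b k x)) \<in> borel_measurable lborel" for k
    using hm Dm borel_measurable_continuous_onI[OF continuous_on_box_cutoff[of UNIV a b k]] by simp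
  show "integrable lborel (\<lambda>x. indicator D x *\<^sub>R \<bar>h x\<bar>)"
    using set_integrable_abs[OF hi] unfolding set_integrable_def .
  show "AE x in lborel. (\<lambda>k. indicator D x *\<^sub>R (h x * box_cutoff a b k x))
      \<longlonglongrightarrow> indicator (box a b) x *\<^sub>R h x"
  proof (rule AE_I2)
    fix x
    have "(\<lambda>k. indicator D x * (h x * box_cutoff a b k x)) \<longlonglongrightarrow> indicator D x * (h x * indicator (box a b) x)"
      by (intro tendsto_intros box_cutoff_tendsto_indicator[OF ab])
    moreover have "indicator D x * (h x * indicator (box a b) x) = indicator (box a b) x * (h x::real)"
      using sub by (cases "x \<in> box a b") (auto simp: indicator_def)
    ultimately show "(\<lambda>k. indicator D x *\<^sub>R (h x * box_cutoff a b k x)) \<longlonglongrightarrow> indicator (box a b) x *\<^sub>R h x"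
      by simp
  qed
  show "AE x in lborel. norm (indicator D x *\<^sub>R (h x * box_cutoff a b k x)) \<le> indicator D x *\<^sub>R \<bar>h x\<bar>" for k
  proof (rule AE_I2)
    fix x
    have "\<bar>h x * box_cutoff a b k x\<bar> \<le> \<bar>h x\<bar>"
      using abs_box_cutoff_le_1[of a b k x] by (simp add: abs_mult mult_left_le)
    then show "norm (indicator D x *\<^sub>R (h x * box_cutoff a b k x)) \<le> indicator D x *\<^sub>R \<bar>h x\<bar>"
      by (auto simp: indicator_def)
  qed
qed

lemma open_countable_box_cover:
  fixes U :: "'a::euclidean_space set"
  assumes "open U"
  obtains F where "countable F" "F \<subseteq> {box a b | a b. cbox a b \<subseteq> U}" "\<Union>F = U"
proof -
  define R where "R = {a::'a. \<forall>i\<in>Basis. a \<bullet> i \<in> \<rat>}"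
  have subR: "R \<subseteq> (\<lambda>f. \<Sum>i\<in>Basis. f i *\<^sub>R i) ` (Basis \<rightarrow>\<^sub>E \<rat>)"
  proof
    fix a assume "a \<in> R"
    then have "restrict (\<lambda>i. a \<bullet> i) Basis \<in> Basis \<rightarrow>\<^sub>E \<rat>" by (auto simp: R_def)
    moreover have "a = (\<Sum>i\<in>Basis. restrict (\<lambda>i. a \<bullet> i) Basis i *\<^sub>R i)"
      by (simp add: euclidean_representation)
    ultimately show "a \<in> (\<lambda>f. \<Sum>i\<in>Basis. f i *\<^sub>R i) ` (Basis \<rightarrow>\<^sub>E \<rat>)" by blast
  qed
  have cP: "countable (Basis \<rightarrow>\<^sub>E (\<rat>::real set))"
    by (intro countable_PiE) (auto simp: countable_rat)
  have cR: "countable R" by (rule countable_subset[OF subR countable_image[OF cP]])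
  define F where "F = {box a b | a b. a \<in> R \<and> b \<in> R \<and> cbox a b \<subseteq> U}"
  have subF: "F \<subseteq> (\<lambda>(a,b). box a b) ` (R \<times> R)" by (auto simp: F_def)
  have cRR: "countable (R \<times> R)" using cR by (intro countable_SIGMA) auto
  have "countable F" by (rule countable_subset[OF subF countable_image[OF cRR]])
  moreover have "F \<subseteq> {box a b | a b. cbox a b \<subseteq> U}" by (auto simp: F_def)
  moreover have "\<Union>F = U"
  proof
    show "\<Union>F \<subseteq> U"
    proof
      fix x assume "x \<in> \<Union>F"
      then obtain a b where "x \<in> box a b" "cbox a b \<subseteq> U" by (auto simp: F_def)
      then show "x \<in> U" using box_subset_cbox[of a b] by blast
    qed
    show "U \<subseteq> \<Union>F"
    proof
      fix x assume "x \<in> U"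
      then obtain e where e: "e > 0" "ball x e \<subseteq> U" using assms openE by blast
      obtain a b where ab: "\<forall>i\<in>Basis. a \<bullet> i \<in> \<rat> \<and> b \<bullet> i \<in> \<rat>" "x \<in> box a b" "box a b \<subseteq> ball x (e/2)"
        using rational_boxes[of "e/2" x] e by auto
      have ne: "box a b \<noteq> {}" using ab(2) by blast
      have "cbox a b = closure (box a b)" using closure_box[OF ne] by simp
      also have "\<dots> \<subseteq> closure (ball x (e/2))" using ab(3) by (rule closure_mono)
      also have "\<dots> = cball x (e/2)" using e by simp
      also have "\<dots> \<subseteq> ball x e" using e by (auto simp: subset_eq)
      finally have "cbox a b \<subseteq> U" using e(2) by (rule order_trans)
      then have "box a b \<in> F" using ab(1) by (auto simp: F_def R_def)
      then show "x \<in> \<Union>F" using ab(2) by blast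
    qed
  qed
  ultimately show ?thesis by (rule that)
qed

lemma restrict_borel_eq_sigma_boxes:
  fixes D :: "'a::euclidean_space set"
  assumes D: "open D"
  shows "((\<inter>) D) ` sets borel = sigma_sets D {box a b | a b. cbox a b \<subseteq> D}"
    (is "_ = sigma_sets D ?E")
proof
  have sa: "sigma_algebra D (sets (restrict_space borel D))"
    using sets.sigma_algebra_axioms[of "restrict_space borel D"] by (simp add: space_restrict_space)
  have "?E \<subseteq> sets (restrict_space borel D)"
  proof
    fix X assume "X \<in> ?E"
    then obtain a b where X: "X = box a b" "cbox a b \<subseteq> D" by blast
    then have "X = D \<inter> box a b" using box_subset_cbox by blast
    then show "X \<in> sets (restrict_space borel D)" by (simp add: sets_restrict_space)
  qed
  then have "sigma_sets D ?E \<subseteq> sets (restrict_space borel D)"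
    by (rule sigma_algebra.sigma_sets_subset[OF sa])
  then show "sigma_sets D ?E \<subseteq> (\<inter>) D ` sets borel" by (simp add: sets_restrict_space)
next
  have "A \<in> sigma_sets UNIV {S. open S} \<Longrightarrow> D \<inter> A \<in> sigma_sets D ?E" for A
  proof (induction rule: sigma_sets.induct)
    case (Basic S)
    then have "open (D \<inter> S)" using D by auto
    then obtain F where F: "countable F" "F \<subseteq> {box a b | a b. cbox a b \<subseteq> D \<inter> S}" "\<Union>F = D \<inter> S"
      by (rule open_countable_box_cover)
    have "\<Union>F \<in> sigma_sets D ?E"
    proof (rule sigma_sets_UNION[OF F(1)])
      fix X assume "X \<in> F"
      then have "X \<in> ?E" using F(2) by blast
      then show "X \<in> sigma_sets D ?E" by (rule sigma_sets.Basic)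
    qed
    then show ?case using F(3) by simp
  next
    case Empty then show ?case by (simp add: sigma_sets.Empty)
  next
    case (Compl a)
    have "D \<inter> (UNIV - a) = D - (D \<inter> a)" by blast
    then show ?case using sigma_sets.Compl[OF Compl.IH] by simp
  next
    case (Union a)
    have "D \<inter> \<Union> (range a) = (\<Union>i. D \<inter> a i)" by blast
    then show ?case using sigma_sets.Union[of "\<lambda>i. D \<inter> a i", OF Union.IH] by simp
  qed
  then show "(\<inter>) D ` sets borel \<subseteq> sigma_sets D ?E" by (auto simp: sets_borel)
qed

lemma Int_stable_boxes_within:
  "Int_stable {box a b | a b :: real^'d. cbox a b \<subseteq> D}"
proof (rule Int_stableI)
  fix X Y assume "X \<in> {box a b | a b :: real^'d. cbox a b \<subseteq> D}" "Y \<in> {box a b | a b. cbox a b \<subseteq> D}"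
  then obtain a b c d where X: "X = box a b" "cbox a b \<subseteq> D" and Y: "Y = box c d"
    by blast
  define m where "m = (\<chi> i. max (a$i) (c$i))"
  define n where "n = (\<chi> i. min (b$i) (d$i))"
  have "X \<inter> Y = box m n" unfolding X Y m_def n_def by (auto simp: mem_box_cart)
  moreover have "cbox m n \<subseteq> cbox a b" unfolding m_def n_def by (auto simp: mem_box_cart)
  ultimately show "X \<inter> Y \<in> {box a b | a b. cbox a b \<subseteq> D}" using X(2) by blast
qed

lemma nn_integral_pos_part_eq_neg_part:
  fixes h :: "'a \<Rightarrow> real"
  assumes "integrable M h" and "integral\<^sup>L M h = 0"
  shows "(\<integral>\<^sup>+x. ennreal (max 0 (h x)) \<partial>M) = (\<integral>\<^sup>+x. ennreal (max 0 (- h x)) \<partial>M)"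
    and "(\<integral>\<^sup>+x. ennreal (max 0 (h x)) \<partial>M) < \<infinity>"
proof -
  have i1: "integrable M (\<lambda>x. max 0 (h x))" and i2: "integrable M (\<lambda>x. max 0 (- h x))"
    using assms(1) by (auto intro: integrable_max)
  have "(\<integral>x. max 0 (h x) \<partial>M) - (\<integral>x. max 0 (- h x) \<partial>M) = (\<integral>x. h x \<partial>M)"
    by (subst Bochner_Integration.integral_diff[OF i1 i2, symmetric])
      (auto intro!: Bochner_Integration.integral_cong)
  then have "(\<integral>x. max 0 (h x) \<partial>M) = (\<integral>x. max 0 (- h x) \<partial>M)" using assms(2) by simp
  moreover have "(\<integral>\<^sup>+x. ennreal (max 0 (h x)) \<partial>M) = ennreal (\<integral>x. max 0 (h x) \<partial>M)"
    by (rule nn_integral_eq_integral[OF i1]) simp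
  moreover have "(\<integral>\<^sup>+x. ennreal (max 0 (- h x)) \<partial>M) = ennreal (\<integral>x. max 0 (- h x) \<partial>M)"
    by (rule nn_integral_eq_integral[OF i2]) simp
  ultimately show "(\<integral>\<^sup>+x. ennreal (max 0 (h x)) \<partial>M) = (\<integral>\<^sup>+x. ennreal (max 0 (- h x)) \<partial>M)"
    and "(\<integral>\<^sup>+x. ennreal (max 0 (h x)) \<partial>M) < \<infinity>" by simp_all
qed

lemma emeasure_density_pos_part_eq_neg_part:
  fixes h :: "'a \<Rightarrow> real"
  assumes hm: "h \<in> borel_measurable M" and hi: "set_integrable M D h" and D: "D \<in> sets M"
    and X: "X \<in> sets M" "X \<subseteq> D" and zero: "(LINT x:X|M. h x) = 0"
  defines "f1 \<equiv> \<lambda>x. ennreal (max 0 (h x)) * indicator D x"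
    and "f2 \<equiv> \<lambda>x. ennreal (max 0 (- h x)) * indicator D x"
  shows "emeasure (density M f1) X = emeasure (density M f2) X" and "emeasure (density M f1) X < \<infinity>"
proof -
  let ?p = "\<lambda>x. indicator X x * h x"
  have "integrable M ?p"
    using set_integrable_subset[OF hi X] by (simp add: set_integrable_def)
  moreover have "integral\<^sup>L M ?p = 0" using zero by (simp add: set_lebesgue_integral_def)
  moreover have "f1 x * indicator X x = ennreal (max 0 (?p x))" "f2 x * indicator X x = ennreal (max 0 (- ?p x))" for x
    using X(2) by (auto simp: f1_def f2_def indicator_def)
  moreover have "f1 \<in> borel_measurable M" "f2 \<in> borel_measurable M"
    using hm D by (simp_all add: f1_def f2_def)
  ultimately show "emeasure (density M f1) X = emeasure (density M f2) X" and "emeasure (density M f1) X < \<infinity>"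
    using nn_integral_pos_part_eq_neg_part[of M ?p] X(1) by (simp_all add: emeasure_density)
qed

lemma AE_eq_0_if_box_integrals_0:
  fixes h :: "real^'d \<Rightarrow> real"
  assumes hm: "h \<in> borel_measurable lborel" and hi: "set_integrable lborel D h" and D: "open D"
    and Z: "\<And>a b. cbox a b \<subseteq> D \<Longrightarrow> (LINT x:box a b|lborel. h x) = 0"
  shows "AE x in lborel. x \<in> D \<longrightarrow> h x = 0"
proof (cases "D = {}")
  case False
  define f1 where "f1 x = ennreal (max 0 (h x)) * indicator D x" for x
  define f2 where "f2 x = ennreal (max 0 (- h x)) * indicator D x" for x
  let ?E = "{box a b | a b. cbox a b \<subseteq> (D::(real^'d) set)}"
  have Dm: "D \<in> sets lborel" using D by simp
  have f1m: "f1 \<in> borel_measurable lborel" and f2m: "f2 \<in> borel_measurable lborel"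
    unfolding f1_def f2_def using hm Dm by simp_all
  have eq_finite: "emeasure (density lborel f1) X = emeasure (density lborel f2) X
      \<and> emeasure (density lborel f1) X < \<infinity>" if XE: "X \<in> ?E" for X
  proof -
    obtain a b where X: "X = box a b" "cbox a b \<subseteq> D" using XE by blast
    then have "X \<subseteq> D" using box_subset_cbox by blast
    then show ?thesis
      using emeasure_density_pos_part_eq_neg_part[OF hm hi Dm _ _ Z[OF X(2)]] X(1)
      unfolding f1_def[abs_def] f2_def[abs_def] by simp
  qed
  obtain F where F: "countable F" "F \<subseteq> ?E" "\<Union>F = D" using open_countable_box_cover[OF D] by blast
  have "density lborel f1 = density lborel f2"
  proof (rule measure_eqI_restrict_generator[of ?E D _ _ F])
    show "sets (restrict_space (density lborel f1) D) = sigma_sets D ?E"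
      and "sets (restrict_space (density lborel f2) D) = sigma_sets D ?E"
      using restrict_borel_eq_sigma_boxes[OF D] by (simp_all add: sets_restrict_space)
    show "AE x in density lborel f1. x \<in> D"
      by (subst AE_density[OF f1m]) (auto simp: f1_def indicator_def)
    show "AE x in density lborel f2. x \<in> D"
      by (subst AE_density[OF f2m]) (auto simp: f2_def indicator_def)
    show "emeasure (density lborel f1) X = emeasure (density lborel f2) X" if "X \<in> ?E" for X
      using eq_finite[OF that] ..
    show "emeasure (density lborel f1) X \<noteq> \<infinity>" if "X \<in> F" for X
    proof -
      have "X \<in> ?E" using that F(2) by blast
      then show ?thesis using eq_finite by fastforce
    qed
    show "?E \<subseteq> Pow D" using box_subset_cbox by blast
    show "F \<noteq> {}" using F(3) False by auto
    show "Int_stable ?E" by (rule Int_stable_boxes_within)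
    show "countable F" "F \<subseteq> ?E" "\<Union>F = D" by (fact F)+
    show "D \<in> sets (density lborel f1)" using Dm by simp
    show "sets (density lborel f1) = sets (density lborel f2)" by simp
  qed
  then have "AE x in lborel. f1 x = f2 x"
    using sigma_finite_measure.density_unique_iff[OF sigma_finite_lborel f1m f2m] by simp
  then show ?thesis
    by eventually_elim (auto simp: f1_def f2_def indicator_def max_def split: if_splits)
qed simp

lemma AE_eq_0_if_orthogonal_to_testfns:
  fixes h :: "real^'d \<Rightarrow> real"
  assumes hm: "h \<in> borel_measurable lborel" and hi: "set_integrable lborel D h" and D: "open D"
    and orth: "\<And>phi gphi. testfn D phi gphi \<Longrightarrow> (LINT x:D|lborel. h x * phi x) = 0"
  shows "AE x in lborel. x \<in> D \<longrightarrow> h x = 0"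
proof (rule AE_eq_0_if_box_integrals_0[OF hm hi D])
  fix a b assume sub: "cbox a b \<subseteq> D"
  show "(LINT x:box a b|lborel. h x) = 0"
  proof (cases "box a b = {}")
    case False
    then have ab: "\<forall>i. a$i < b$i" by (simp add: interval_ne_empty_cart)
    have "box a b \<subseteq> D" using sub box_subset_cbox by blast
    then have "(\<lambda>k. LINT x:D|lborel. h x * box_cutoff a b k x) \<longlonglongrightarrow> (LINT x:box a b|lborel. h x)"
      using D by (intro set_integral_box_cutoff_tendsto[OF hm hi _ ab]) simp_all
    moreover have "(LINT x:D|lborel. h x * box_cutoff a b k x) = 0" for k
      using orth[OF testfn_box_cutoff[OF ab sub]] .
    ultimately have "(\<lambda>k. 0) \<longlonglongrightarrow> (LINT x:box a b|lborel. h x)" by simp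
    then show ?thesis using LIMSEQ_unique[OF tendsto_const] by metis
  qed (simp add: set_lebesgue_integral_def)
qed

lemma testfn_continuous:
  assumes "testfn D phi gphi"
  shows "continuous_on UNIV phi"
proof (rule continuous_at_imp_continuous_on, rule ballI)
  fix x
  have "(phi has_derivative (\<lambda>h. h \<bullet> gphi x)) (at x)"
    using assms by (simp add: testfn_def gderiv_def)
  then show "isCont phi x" by (rule has_derivative_continuous)
qed

lemma testfn_bounded:
  assumes "testfn D phi gphi"
  obtains B where "\<And>x. \<bar>phi x\<bar> \<le> B"
proof -
  let ?K = "closure {x. phi x \<noteq> 0}"
  have "compact ?K" using assms by (simp add: testfn_def)
  then have "compact (phi ` ?K)"
    by (rule compact_continuous_image[OF continuous_on_subset[OF testfn_continuous[OF assms] subset_UNIV]])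
  then have "bounded (phi ` ?K)" by (rule compact_imp_bounded)
  then obtain B where B: "\<forall>y \<in> phi ` ?K. norm y \<le> B"
    unfolding bounded_iff ..
  have "\<bar>phi x\<bar> \<le> max 0 B" for x
  proof (cases "phi x = 0")
    case False
    then have "x \<in> ?K" by (intro closure_subset[THEN subsetD]) simp
    then have "norm (phi x) \<le> B" using B[rule_format, OF imageI] by simp
    then show ?thesis by simp
  qed simp
  then show ?thesis by (rule that)
qed

lemma set_integrable_mult_bounded:
  fixes u :: "'a \<Rightarrow> real"
  assumes "set_integrable M A u" "A \<in> sets M" "phi \<in> borel_measurable M" "\<And>x. \<bar>phi x\<bar> \<le> B"
  shows "set_integrable M A (\<lambda>x. u x * phi x)"
  unfolding set_integrable_def
proof (rule Bochner_Integration.integrable_bound)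
  show "integrable M (\<lambda>x. B *\<^sub>R (indicator A x *\<^sub>R u x))"
    using assms(1) by (simp add: set_integrable_def)
  have "(\<lambda>x. indicator A x *\<^sub>R u x) \<in> borel_measurable M"
    using assms(1) unfolding set_integrable_def by (rule borel_measurable_integrable)
  then show "(\<lambda>x. indicator A x *\<^sub>R (u x * phi x)) \<in> borel_measurable M"
    using assms(3) by (simp add: mult.assoc[symmetric])
  show "AE x in M. norm (indicator A x *\<^sub>R (u x * phi x)) \<le> norm (B *\<^sub>R (indicator A x *\<^sub>R u x))"
  proof (rule AE_I2)
    fix x
    have "\<bar>u x\<bar> * \<bar>phi x\<bar> \<le> \<bar>u x\<bar> * \<bar>B\<bar>"
      using assms(4)[of x] by (intro mult_left_mono) auto
    then have "\<bar>u x * phi x\<bar> \<le> \<bar>B\<bar> * \<bar>u x\<bar>" by (simp add: abs_mult mult.commute)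
    then show "norm (indicator A x *\<^sub>R (u x * phi x)) \<le> norm (B *\<^sub>R (indicator A x *\<^sub>R u x))"
      by (auto simp: indicator_def abs_mult)
  qed
qed

lemma set_integrable_component_if_square:
  fixes g :: "real^'d \<Rightarrow> real^'d"
  assumes gm: "g \<in> borel_measurable lborel" and gi: "set_integrable lborel D (\<lambda>x. (norm (g x))^2)"
    and "bounded D" and Dm: "D \<in> sets lborel"
  shows "set_integrable lborel D (\<lambda>x. g x $ i)"
  unfolding set_integrable_def
proof (rule Bochner_Integration.integrable_bound)
  have "integrable lborel (indicator D :: _ \<Rightarrow> real)"
    using Dm emeasure_bounded_finite[OF \<open>bounded D\<close>] by simp
  then show "integrable lborel (\<lambda>x. indicator D x + indicator D x *\<^sub>R (norm (g x))^2)"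
    using gi by (simp add: set_integrable_def)
  show "(\<lambda>x. indicator D x *\<^sub>R g x $ i) \<in> borel_measurable lborel"
    using measurable_compose[OF gm borel_measurable_nth] Dm by simp
  show "AE x in lborel. norm (indicator D x *\<^sub>R g x $ i) \<le> norm (indicator D x + indicator D x *\<^sub>R (norm (g x))^2)"
  proof (rule AE_I2)
    fix x
    have "\<bar>g x $ i\<bar> \<le> norm (g x)" by (rule component_le_norm_cart)
    also have "\<dots> \<le> 1 + (norm (g x))^2"
    proof (cases "norm (g x) \<le> 1")
      case False
      then have "norm (g x) \<le> norm (g x) * norm (g x)" by (simp add: mult_le_cancel_left1)
      then show ?thesis by (simp add: power2_eq_square)
    qed (use zero_le_power2[of "norm (g x)"] in linarith)
    finally show "norm (indicator D x *\<^sub>R g x $ i) \<le> norm (indicator D x + indicator D x *\<^sub>R (norm (g x))^2)"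
      by (auto simp: indicator_def)
  qed
qed

lemma weak_grad_unique:
  fixes f :: "real^'d \<Rightarrow> real"
  assumes D: "open D" "bounded D" and H: "H1 D f g1" "H1 D f g2"
  shows "AE x in lborel. x \<in> D \<longrightarrow> g1 x = g2 x"
proof -
  have Dm: "D \<in> sets lborel" using D by simp
  have component: "AE x in lborel. x \<in> D \<longrightarrow> g1 x $ i - g2 x $ i = 0" for i
  proof (rule AE_eq_0_if_orthogonal_to_testfns[OF _ _ D(1)])
    have "g1 \<in> borel_measurable lborel" "g2 \<in> borel_measurable lborel"
      using H by (simp_all add: H1_def)
    then show "(\<lambda>x. g1 x $ i - g2 x $ i) \<in> borel_measurable lborel"
      by (intro borel_measurable_diff measurable_compose[OF _ borel_measurable_nth])
    have i: "set_integrable lborel D (\<lambda>x. g x $ i)" if "H1 D f g" for g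
      using that set_integrable_component_if_square[OF _ _ D(2) Dm] by (simp add: H1_def)
    show "set_integrable lborel D (\<lambda>x. g1 x $ i - g2 x $ i)"
      using i[OF H(1)] i[OF H(2)] by (rule set_integral_diff(1))
    fix phi gphi assume phi: "testfn D phi gphi"
    obtain B where B: "\<And>x. \<bar>phi x\<bar> \<le> B" using testfn_bounded[OF phi] by blast
    have phim: "phi \<in> borel_measurable lborel"
      using borel_measurable_continuous_onI[OF testfn_continuous[OF phi]] by simp
    have j: "set_integrable lborel D (\<lambda>x. g x $ i * phi x)" if "H1 D f g" for g
      using set_integrable_mult_bounded[OF i[OF that] Dm phim B] .
    have w: "(LINT x:D|lborel. g x $ i * phi x) = - (LINT x:D|lborel. f x * (gphi x $ i))" if "H1 D f g" for g
      using that phi by (simp add: H1_def weak_grad_def)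
    have "(LINT x:D|lborel. (g1 x $ i - g2 x $ i) * phi x)
        = (LINT x:D|lborel. g1 x $ i * phi x) - (LINT x:D|lborel. g2 x $ i * phi x)"
      unfolding left_diff_distrib by (rule set_integral_diff(2)[OF j[OF H(1)] j[OF H(2)]])
    also have "\<dots> = 0" using w[OF H(1)] w[OF H(2)] by simp
    finally show "(LINT x:D|lborel. (g1 x $ i - g2 x $ i) * phi x) = 0" .
  qed
  then have "AE x in lborel. \<forall>i. x \<in> D \<longrightarrow> g1 x $ i - g2 x $ i = 0"
    by (intro AE_all_countable[THEN iffD2] allI)
  then show ?thesis by eventually_elim (simp add: vec_eq_iff)
qed

section \<open>Energies of random fields\<close>

lemma continuous_on_mmult[continuous_intros]:
  fixes f g :: "'a::topological_space \<Rightarrow> real^'n^'n"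
  assumes "continuous_on S f" "continuous_on S g"
  shows "continuous_on S (\<lambda>z. f z ** g z)"
  unfolding matrix_matrix_mult_def
  by (intro continuous_intros assms)

lemma continuous_on_mvmult[continuous_intros]:
  fixes f :: "'a::topological_space \<Rightarrow> real^'n^'n" and g :: "'a \<Rightarrow> real^'n"
  assumes "continuous_on S f" "continuous_on S g"
  shows "continuous_on S (\<lambda>z. f z *v g z)"
  unfolding matrix_vector_mult_def
  by (intro continuous_intros assms)

lemma continuous_on_mpow[continuous_intros]:
  fixes f :: "'a::topological_space \<Rightarrow> real^'n^'n"
  assumes "continuous_on S f"
  shows "continuous_on S (\<lambda>z. mpow (f z) r)"
proof (induction r)
  case 0 then show ?case by simp
next
  case (Suc r) then show ?case using assms by (simp add: continuous_on_mmult)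
qed
lemma borel_measurable_quadratic_form_mpow:
  fixes C :: "'a \<Rightarrow> real^'d^'d" and G :: "'a \<Rightarrow> real^'d"
  assumes "C \<in> borel_measurable M" "G \<in> borel_measurable M"
  shows "(\<lambda>z. G z \<bullet> (mpow (C z) r *v G z)) \<in> borel_measurable M"
proof -
  have "continuous_on UNIV (\<lambda>p::((real^'d^'d) \<times> (real^'d)). snd p \<bullet> (mpow (fst p) r *v snd p))"
    by (intro continuous_intros)
  from borel_measurable_continuous_Pair[OF assms this] show ?thesis by simp
qed

definition energy :: "(real^'d) set \<Rightarrow> (real^'d \<Rightarrow> 'w \<Rightarrow> real^'d^'d) \<Rightarrow> (real^'d \<Rightarrow> 'w \<Rightarrow> real^'d)
    \<Rightarrow> nat \<Rightarrow> 'w \<Rightarrow> ennreal" where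
  "energy D C G r w = (\<integral>\<^sup>+x\<in>D. ennreal (G x w \<bullet> (mpow (C x w) r *v G x w)) \<partial>lborel)"

definition cutoff :: "('w \<Rightarrow> bool) \<Rightarrow> ('x \<Rightarrow> 'w \<Rightarrow> 'a::zero) \<Rightarrow> 'x \<Rightarrow> 'w \<Rightarrow> 'a" where
  "cutoff P v x w = (if P w then v x w else 0)"

lemma energy_cutoff: "energy D C (cutoff P G) r w = indicator {w. P w} w * energy D C G r w"
  by (simp add: energy_def cutoff_def indicator_def)

lemma testfn_zero: "testfn D (\<lambda>x. 0) (\<lambda>x. 0)"
  unfolding testfn_def by (simp add: GDERIV_const)

lemma H1_zero: "H1 D (\<lambda>x. 0) (\<lambda>x. 0)"
  unfolding H1_def weak_grad_def by (simp add: set_integrable_def set_lebesgue_integral_def)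

lemma H10_zero: "H10 D (\<lambda>x. 0)"
  unfolding H10_def using H1_zero testfn_zero by (fastforce simp: set_lebesgue_integral_def)

lemma H1_cutoff: "H1 D (\<lambda>x. v x w) (\<lambda>x. G x w) \<Longrightarrow> H1 D (\<lambda>x. cutoff P v x w) (\<lambda>x. cutoff P G x w)"
  by (cases "P w") (simp_all add: cutoff_def H1_zero)

lemma H10_cutoff: "H10 D (\<lambda>x. v x w) \<Longrightarrow> H10 D (\<lambda>x. cutoff P v x w)"
  by (cases "P w") (simp_all add: cutoff_def H10_zero)

text \<open>The norms are defined through \<open>grad\<close>, an arbitrary choice of weak gradient; by uniqueness of weak
  gradients, any jointly measurable weak gradient gives the same value.\<close>

lemma grad_AE_eq:
  assumes "open D" "bounded D" "H1 D f g"
  shows "AE x in lborel. x \<in> D \<longrightarrow> grad D f x = g x"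
proof -
  have "H1 D f (grad D f)" unfolding grad_def by (rule someI[of "H1 D f" g, OF assms(3)])
  then show ?thesis using weak_grad_unique[OF assms(1,2) _ assms(3)] by blast
qed

lemma Xnorm_less_top_iff: "Xnorm D Gam C gam s r v < top \<longleftrightarrow> Xsq D Gam C gam s r v < top"
  by (simp add: Xnorm_def top_unique less_top[symmetric])

lemma Xnorm_le_if_Xsq_le:
  assumes le: "ennreal (c^2) * Xsq D Gam C gam s r v \<le> ennreal (d^2) * Xsq D Gam C gam s' r' v"
    and c: "0 < c" and d: "0 < d"
  shows "ennreal c * Xnorm D Gam C gam s r v \<le> ennreal d * Xnorm D Gam C gam s' r' v"
proof (cases "Xsq D Gam C gam s' r' v = \<infinity>")
  case True then show ?thesis using d by (simp add: Xnorm_def ennreal_mult_top)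
next
  case False
  then obtain y where y: "0 \<le> y" "Xsq D Gam C gam s' r' v = ennreal y" by (cases "Xsq D Gam C gam s' r' v") auto
  with le c obtain x where x: "0 \<le> x" "Xsq D Gam C gam s r v = ennreal x"
    by (cases "Xsq D Gam C gam s r v") (auto simp: ennreal_mult_top ennreal_mult[symmetric] top_unique)
  have "c^2 * x \<le> d^2 * y" using le x y by (simp add: ennreal_mult[symmetric])
  then have "sqrt (c^2 * x) \<le> sqrt (d^2 * y)" by (rule real_sqrt_le_mono)
  then have "c * sqrt x \<le> d * sqrt y" using c d by (simp add: real_sqrt_mult)
  then show ?thesis using x y c d by (simp add: Xnorm_def ennreal_mult[symmetric])
qed

lemma Xnorm_less_if_Xsq_less:
  assumes "Xsq D Gam C gam s r v < ennreal (e^2)" and "0 < e"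
  shows "Xnorm D Gam C gam s r v < ennreal e"
proof -
  obtain x where x: "0 \<le> x" "Xsq D Gam C gam s r v = ennreal x"
    using assms(1) by (cases "Xsq D Gam C gam s r v") auto
  then have "x < e^2" using assms by (simp add: ennreal_less_iff)
  then have "sqrt x < e" using assms(2) by (simp add: real_sqrt_less_iff real_less_lsqrt)
  then show ?thesis using x assms(2) by (simp add: Xnorm_def ennreal_less_iff)
qed

lemma Xspace_subset_if_Xnorm_le:
  assumes "0 < c"
    and le: "\<And>v. admissible D Gam v \<Longrightarrow> ennreal c * Xnorm D Gam C gam s r v \<le> ennreal d * Xnorm D Gam C gam s' r' v"
  shows "Xspace D Gam C gam s' r' \<subseteq> Xspace D Gam C gam s r"
proof
  fix v assume "v \<in> Xspace D Gam C gam s' r'"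
  then have "admissible D Gam v" and "ennreal d * Xnorm D Gam C gam s' r' v < \<infinity>"
    by (auto simp: Xspace_def ennreal_mult_less_top)
  then have "ennreal c * Xnorm D Gam C gam s r v < \<infinity>" using le by (meson le_less_trans)
  then show "v \<in> Xspace D Gam C gam s r"
    using \<open>0 < c\<close> \<open>admissible D Gam v\<close> by (auto simp: Xspace_def ennreal_mult_less_top)
qed

lemma ennreal_mult_le_ennreal:
  assumes "0 \<le> c" "c * q \<le> p"
  shows "ennreal c * ennreal q \<le> ennreal p"
  using assms by (cases "0 \<le> q") (simp_all add: ennreal_mult[symmetric] ennreal_leI ennreal_neg)

lemma admissibleE:
  assumes "admissible D Gam v"
  obtains G where "(\<lambda>(x, w). G x w) \<in> borel_measurable (lborel \<Otimes>\<^sub>M Gam)"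
    and "AE w in Gam. H1 D (\<lambda>x. v x w) (\<lambda>x. G x w)"
    and "AE w in Gam. H10 D (\<lambda>x. v x w)"
  using assms unfolding admissible_def by (metis (mono_tags, lifting) AE_mp AE_I2)

locale random_elliptic_coefficient =
  fixes D :: "(real^'d) set" and Gam :: "'w measure" and C :: "real^'d \<Rightarrow> 'w \<Rightarrow> real^'d^'d"
    and gam :: "'w \<Rightarrow> real" and alpha :: real
  assumes open_D: "open D" and bounded_D: "bounded D"
    and C_measurable: "(\<lambda>(x, w). C x w) \<in> borel_measurable (lborel \<Otimes>\<^sub>M Gam)"
    and gam_measurable: "gam \<in> borel_measurable Gam" and gam_pos: "\<forall>w. gam w > 0"
    and alpha_pos: "alpha > 0"
    and ellipticity: "AE w in Gam. AE x in lborel. x \<in> D \<longrightarrow>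
           sym_posdef (C x w) \<and> (\<forall>l. is_eigenvalue (C x w) l \<longrightarrow> alpha \<le> l \<and> l \<le> gam w)"
begin

lemma AE_eigenvalues_between:
  "AE w in Gam. w \<in> space Gam \<and> (AE x in lborel. x \<in> D \<longrightarrow> eigenvalues_between (C x w) alpha (gam w))"
proof (rule AE_mp[OF ellipticity], rule AE_I2, rule impI, rule conjI)
  fix w assume "w \<in> space Gam" then show "w \<in> space Gam" .
next
  fix w assume "w \<in> space Gam" and "AE x in lborel. x \<in> D \<longrightarrow> sym_posdef (C x w) \<and>
    (\<forall>l. is_eigenvalue (C x w) l \<longrightarrow> alpha \<le> l \<and> l \<le> gam w)"
  then show "AE x in lborel. x \<in> D \<longrightarrow> eigenvalues_between (C x w) alpha (gam w)"
    by (elim AE_mp) (auto intro!: AE_I2 simp: eigenvalues_between_def sym_posdef_def)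
qed

lemma borel_measurable_energy_integrand:
  assumes "(\<lambda>(x, w). G x w) \<in> borel_measurable (lborel \<Otimes>\<^sub>M Gam)"
  shows "(\<lambda>(x, w). ennreal (G x w \<bullet> (mpow (C x w) r *v G x w)) * indicator D x)
    \<in> borel_measurable (lborel \<Otimes>\<^sub>M Gam)"
proof -
  have "D \<in> sets lborel" using open_D by simp
  moreover have "(\<lambda>z. (case z of (x, w) \<Rightarrow> G x w) \<bullet> (mpow (case z of (x, w) \<Rightarrow> C x w) r *v (case z of (x, w) \<Rightarrow> G x w)))
      \<in> borel_measurable (lborel \<Otimes>\<^sub>M Gam)"
    by (rule borel_measurable_quadratic_form_mpow[OF C_measurable assms])
  ultimately show ?thesis by (simp add: case_prod_beta)
qed

lemma borel_measurable_energy: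
  assumes "(\<lambda>(x, w). G x w) \<in> borel_measurable (lborel \<Otimes>\<^sub>M Gam)"
  shows "energy D C G r \<in> borel_measurable Gam"
proof -
  have "(\<lambda>(w, x). ennreal (G x w \<bullet> (mpow (C x w) r *v G x w)) * indicator D x) \<in> borel_measurable (Gam \<Otimes>\<^sub>M lborel)"
    using borel_measurable_energy_integrand[OF assms] by (subst measurable_pair_swap_iff) simp
  from lborel.borel_measurable_nn_integral[OF this] show ?thesis unfolding energy_def .
qed

lemma Xsq_eq_energy:
  assumes "AE w in Gam. H1 D (\<lambda>x. v x w) (\<lambda>x. G x w)"
  shows "Xsq D Gam C gam s r v = (\<integral>\<^sup>+w. ennreal (gam w ^ s) * energy D C G r w \<partial>Gam)"
  unfolding Xsq_def energy_def
proof (rule nn_integral_cong_AE)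
  show "AE w in Gam. ennreal (gam w ^ s) *
        (\<integral>\<^sup>+x\<in>D. ennreal (grad D (\<lambda>x. v x w) x \<bullet> (mpow (C x w) r *v grad D (\<lambda>x. v x w) x)) \<partial>lborel)
      = ennreal (gam w ^ s) * (\<integral>\<^sup>+x\<in>D. ennreal (G x w \<bullet> (mpow (C x w) r *v G x w)) \<partial>lborel)"
    using assms
  proof (rule AE_mp, intro AE_I2 impI)
    fix w assume "H1 D (\<lambda>x. v x w) (\<lambda>x. G x w)"
    from grad_AE_eq[OF open_D bounded_D this]
    have "AE x in lborel. ennreal (grad D (\<lambda>x. v x w) x \<bullet> (mpow (C x w) r *v grad D (\<lambda>x. v x w) x)) * indicator D x
       = ennreal (G x w \<bullet> (mpow (C x w) r *v G x w)) * indicator D x"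
      by (rule AE_mp) (auto intro!: AE_I2 simp: indicator_def)
    then show "ennreal (gam w ^ s) *
        (\<integral>\<^sup>+x\<in>D. ennreal (grad D (\<lambda>x. v x w) x \<bullet> (mpow (C x w) r *v grad D (\<lambda>x. v x w) x)) \<partial>lborel)
      = ennreal (gam w ^ s) * (\<integral>\<^sup>+x\<in>D. ennreal (G x w \<bullet> (mpow (C x w) r *v G x w)) \<partial>lborel)"
      by (simp cong: nn_integral_cong_AE)
  qed
qed

lemma energy_le_scaled:
  assumes G: "(\<lambda>(x, w). G x w) \<in> borel_measurable (lborel \<Otimes>\<^sub>M Gam)" and w: "w \<in> space Gam"
    and "0 \<le> c" "0 \<le> d"
    and le: "AE x in lborel. x \<in> D \<longrightarrow> c * (G x w \<bullet> (mpow (C x w) r *v G x w)) \<le> d * (G x w \<bullet> (mpow (C x w) r' *v G x w))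
                 \<and> 0 \<le> G x w \<bullet> (mpow (C x w) r' *v G x w)"
  shows "ennreal c * energy D C G r w \<le> ennreal d * energy D C G r' w"
proof -
  have meas: "(\<lambda>x. ennreal (G x w \<bullet> (mpow (C x w) r *v G x w)) * indicator D x) \<in> borel_measurable lborel" for r
    using measurable_compose[OF measurable_Pair2'[OF w] borel_measurable_energy_integrand[OF G]] by simp
  have "ennreal c * energy D C G r w
      = (\<integral>\<^sup>+x. ennreal c * (ennreal (G x w \<bullet> (mpow (C x w) r *v G x w)) * indicator D x) \<partial>lborel)"
    unfolding energy_def by (simp add: nn_integral_cmult[OF meas])
  also have "\<dots> \<le> (\<integral>\<^sup>+x. ennreal d * (ennreal (G x w \<bullet> (mpow (C x w) r' *v G x w)) * indicator D x) \<partial>lborel)"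
    using le by (intro nn_integral_mono_AE, elim AE_mp)
      (auto intro!: AE_I2 ennreal_mult_le_ennreal simp: indicator_def ennreal_mult[symmetric] \<open>0 \<le> c\<close> \<open>0 \<le> d\<close>)
  also have "\<dots> = ennreal d * energy D C G r' w"
    unfolding energy_def by (simp add: nn_integral_cmult[OF meas])
  finally show ?thesis .
qed

lemma AE_energy_le:
  fixes c d :: "real \<Rightarrow> real"
  assumes G: "(\<lambda>(x, w). G x w) \<in> borel_measurable (lborel \<Otimes>\<^sub>M Gam)"
    and c: "\<And>g. 0 < g \<Longrightarrow> 0 \<le> c g" and d: "\<And>g. 0 < g \<Longrightarrow> 0 \<le> d g"
    and le: "\<And>(A :: real^'d^'d) g x. eigenvalues_between A alpha g \<Longrightarrow> 0 < g \<Longrightarrow>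
      c g * (g ^ s * (x \<bullet> (mpow A r *v x))) \<le> d g * (g ^ s' * (x \<bullet> (mpow A r' *v x)))"
  shows "AE w in Gam. ennreal (c (gam w)) * (ennreal (gam w ^ s) * energy D C G r w)
    \<le> ennreal (d (gam w)) * (ennreal (gam w ^ s') * energy D C G r' w)"
  using AE_eigenvalues_between
proof (rule AE_mp, intro AE_I2 impI)
  fix w assume w: "w \<in> space Gam \<and> (AE x in lborel. x \<in> D \<longrightarrow> eigenvalues_between (C x w) alpha (gam w))"
  have g: "0 < gam w" using gam_pos by simp
  have "ennreal (c (gam w) * gam w ^ s) * energy D C G r w \<le> ennreal (d (gam w) * gam w ^ s') * energy D C G r' w"
  proof (rule energy_le_scaled[OF G])
    show "0 \<le> c (gam w) * gam w ^ s" "0 \<le> d (gam w) * gam w ^ s'" using c d g by simp_all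
    show "AE x in lborel. x \<in> D \<longrightarrow> c (gam w) * gam w ^ s * (G x w \<bullet> (mpow (C x w) r *v G x w))
        \<le> d (gam w) * gam w ^ s' * (G x w \<bullet> (mpow (C x w) r' *v G x w)) \<and> 0 \<le> G x w \<bullet> (mpow (C x w) r' *v G x w)"
      using w[THEN conjunct2]
    proof (rule AE_mp, intro AE_I2 impI)
      fix x assume "x \<in> D \<longrightarrow> eigenvalues_between (C x w) alpha (gam w)" and "x \<in> D"
      then have A: "eigenvalues_between (C x w) alpha (gam w)" by simp
      then have "0 \<le> G x w \<bullet> (mpow (C x w) r' *v G x w)"
        using alpha_pos by (rule quadratic_form_mpow_nonneg)
      with le[OF A g, of "G x w"]
      show "c (gam w) * gam w ^ s * (G x w \<bullet> (mpow (C x w) r *v G x w))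
        \<le> d (gam w) * gam w ^ s' * (G x w \<bullet> (mpow (C x w) r' *v G x w)) \<and> 0 \<le> G x w \<bullet> (mpow (C x w) r' *v G x w)"
        by (simp add: mult.assoc)
    qed
  qed (use w in simp)
  then show "ennreal (c (gam w)) * (ennreal (gam w ^ s) * energy D C G r w)
    \<le> ennreal (d (gam w)) * (ennreal (gam w ^ s') * energy D C G r' w)"
    using c d g by (simp add: ennreal_mult mult.assoc)
qed

section \<open>Norm inequalities and dense embeddings\<close>

lemma Xsq_le_scaled:
  assumes v: "admissible D Gam v" and "0 \<le> c" "0 \<le> d"
    and le: "\<And>(A :: real^'d^'d) g x. eigenvalues_between A alpha g \<Longrightarrow> 0 < g \<Longrightarrow>
      c * (g ^ s * (x \<bullet> (mpow A r *v x))) \<le> d * (g ^ s' * (x \<bullet> (mpow A r' *v x)))"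
  shows "ennreal c * Xsq D Gam C gam s r v \<le> ennreal d * Xsq D Gam C gam s' r' v"
proof -
  obtain G where G: "(\<lambda>(x, w). G x w) \<in> borel_measurable (lborel \<Otimes>\<^sub>M Gam)"
    and H: "AE w in Gam. H1 D (\<lambda>x. v x w) (\<lambda>x. G x w)"
    using v by (rule admissibleE)
  have meas: "(\<lambda>w. ennreal (gam w ^ k) * energy D C G r w) \<in> borel_measurable Gam" for k r
    using borel_measurable_energy[OF G] gam_measurable by measurable
  have "ennreal c * Xsq D Gam C gam s r v = (\<integral>\<^sup>+w. ennreal c * (ennreal (gam w ^ s) * energy D C G r w) \<partial>Gam)"
    by (simp add: Xsq_eq_energy[OF H] nn_integral_cmult[OF meas])
  also have "\<dots> \<le> (\<integral>\<^sup>+w. ennreal d * (ennreal (gam w ^ s') * energy D C G r' w) \<partial>Gam)"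
    by (intro nn_integral_mono_AE AE_energy_le[OF G]) (use assms(2,3) le in simp_all)
  also have "\<dots> = ennreal d * Xsq D Gam C gam s' r' v"
    by (simp add: Xsq_eq_energy[OF H] nn_integral_cmult[OF meas])
  finally show ?thesis .
qed

lemma admissible_cutoff:
  assumes v: "admissible D Gam v" and P: "Measurable.pred Gam P"
  shows "admissible D Gam (cutoff P v)"
proof -
  obtain G where G: "(\<lambda>(x, w). G x w) \<in> borel_measurable (lborel \<Otimes>\<^sub>M Gam)"
    and H: "AE w in Gam. H1 D (\<lambda>x. v x w) (\<lambda>x. G x w)" and H0: "AE w in Gam. H10 D (\<lambda>x. v x w)"
    using v by (rule admissibleE)
  have [measurable]: "(\<lambda>(x, w). v x w) \<in> borel_measurable (lborel \<Otimes>\<^sub>M Gam)"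
    using v by (simp add: admissible_def)
  note [measurable] = G P
  have "(\<lambda>(x, w). cutoff P v x w) \<in> borel_measurable (lborel \<Otimes>\<^sub>M Gam)"
    and "(\<lambda>(x, w). cutoff P G x w) \<in> borel_measurable (lborel \<Otimes>\<^sub>M Gam)"
    unfolding cutoff_def by measurable
  moreover have "AE w in Gam. H10 D (\<lambda>x. cutoff P v x w) \<and> H1 D (\<lambda>x. cutoff P v x w) (\<lambda>x. cutoff P G x w)"
    using H H0 by eventually_elim (simp add: H1_cutoff H10_cutoff)
  ultimately show ?thesis unfolding admissible_def by blast
qed

lemma Xsq_cutoff:
  assumes "AE w in Gam. H1 D (\<lambda>x. v x w) (\<lambda>x. G x w)"
  shows "Xsq D Gam C gam s r (cutoff P v)
    = (\<integral>\<^sup>+w. indicator {w. P w} w * (ennreal (gam w ^ s) * energy D C G r w) \<partial>Gam)"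
proof -
  have "AE w in Gam. H1 D (\<lambda>x. cutoff P v x w) (\<lambda>x. cutoff P G x w)"
    using assms by eventually_elim (rule H1_cutoff)
  then show ?thesis by (simp add: Xsq_eq_energy energy_cutoff mult.left_commute)
qed

lemma Xsq_truncation_le:
  assumes v: "admissible D Gam v"
    and le: "\<And>(A :: real^'d^'d) g x. eigenvalues_between A alpha g \<Longrightarrow> 0 < g \<Longrightarrow>
      g ^ s' * (x \<bullet> (mpow A r' *v x)) \<le> g / alpha * (g ^ s * (x \<bullet> (mpow A r *v x)))"
  shows "Xsq D Gam C gam s' r' (cutoff (\<lambda>w. gam w \<le> real n) v) \<le> ennreal (real n / alpha) * Xsq D Gam C gam s r v"
proof -
  obtain G where G: "(\<lambda>(x, w). G x w) \<in> borel_measurable (lborel \<Otimes>\<^sub>M Gam)"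
    and H: "AE w in Gam. H1 D (\<lambda>x. v x w) (\<lambda>x. G x w)"
    using v by (rule admissibleE)
  have meas: "(\<lambda>w. ennreal (gam w ^ s) * energy D C G r w) \<in> borel_measurable Gam"
    using borel_measurable_energy[OF G] gam_measurable by measurable
  have pointwise: "(if g \<le> real n then 1 else 0) * (g ^ s' * (x \<bullet> (mpow A r' *v x)))
      \<le> real n / alpha * (g ^ s * (x \<bullet> (mpow A r *v x)))"
    if A: "eigenvalues_between A alpha g" and "0 < g" for A :: "real^'d^'d" and g x
  proof -
    have "0 \<le> g ^ s * (x \<bullet> (mpow A r *v x))"
      using \<open>0 < g\<close> quadratic_form_mpow_nonneg[OF A alpha_pos] by simp
    show ?thesis
    proof (cases "g \<le> real n")
      case True
      have "g ^ s' * (x \<bullet> (mpow A r' *v x)) \<le> g / alpha * (g ^ s * (x \<bullet> (mpow A r *v x)))"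
        using le[OF A \<open>0 < g\<close>] .
      also have "\<dots> \<le> real n / alpha * (g ^ s * (x \<bullet> (mpow A r *v x)))"
        using \<open>0 \<le> g ^ s * _\<close> True alpha_pos by (intro mult_right_mono divide_right_mono) auto
      finally show ?thesis using True by simp
    qed (use \<open>0 \<le> g ^ s * _\<close> alpha_pos in simp)
  qed
  have "Xsq D Gam C gam s' r' (cutoff (\<lambda>w. gam w \<le> real n) v)
      = (\<integral>\<^sup>+w. ennreal (if gam w \<le> real n then 1 else 0) * (ennreal (gam w ^ s') * energy D C G r' w) \<partial>Gam)"
    unfolding Xsq_cutoff[OF H] by (auto simp: indicator_def intro!: nn_integral_cong)
  also have "\<dots> \<le> (\<integral>\<^sup>+w. ennreal (real n / alpha) * (ennreal (gam w ^ s) * energy D C G r w) \<partial>Gam)"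
    by (intro nn_integral_mono_AE AE_energy_le[OF G]) (use pointwise alpha_pos in simp_all)
  also have "\<dots> = ennreal (real n / alpha) * Xsq D Gam C gam s r v"
    by (simp add: Xsq_eq_energy[OF H] nn_integral_cmult[OF meas])
  finally show ?thesis .
qed

lemma Xsq_cutoff_tail_small:
  assumes v: "admissible D Gam v" and fin: "Xsq D Gam C gam s r v < \<infinity>" and "0 < e"
  obtains n where "Xsq D Gam C gam s r (cutoff (\<lambda>w. real n < gam w) v) < e"
proof -
  obtain G where G: "(\<lambda>(x, w). G x w) \<in> borel_measurable (lborel \<Otimes>\<^sub>M Gam)"
    and H: "AE w in Gam. H1 D (\<lambda>x. v x w) (\<lambda>x. G x w)"
    using v by (rule admissibleE)
  define f where "f n w = indicator {w. real n < gam w} w * (ennreal (gam w ^ s) * energy D C G r w)"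
    for n :: nat and w
  have tail: "Xsq D Gam C gam s r (cutoff (\<lambda>w. real n < gam w) v) = (\<integral>\<^sup>+w. f n w \<partial>Gam)" for n
    unfolding f_def by (rule Xsq_cutoff[OF H])
  have "decseq f"
    by (intro decseq_SucI le_funI) (auto simp: f_def indicator_def)
  moreover have "f n \<in> borel_measurable Gam" for n
    unfolding f_def using borel_measurable_energy[OF G] gam_measurable by measurable
  moreover have "(\<integral>\<^sup>+w. f 0 w \<partial>Gam) < \<infinity>"
  proof -
    have "(\<integral>\<^sup>+w. f 0 w \<partial>Gam) \<le> Xsq D Gam C gam s r v"
      unfolding Xsq_eq_energy[OF H] f_def by (intro nn_integral_mono) (auto simp: indicator_def)
    then show ?thesis using fin by (rule le_less_trans)
  qed
  ultimately have "(\<integral>\<^sup>+w. (INF n. f n w) \<partial>Gam) = (INF n. \<integral>\<^sup>+w. f n w \<partial>Gam)"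
    by (rule nn_integral_monotone_convergence_INF_decseq)
  moreover have "(INF n. f n w) = 0" for w
  proof -
    obtain N :: nat where "gam w \<le> real N" using real_arch_simple by blast
    then have "f N w = 0" by (simp add: f_def)
    then show ?thesis by (metis INF_lower UNIV_I le_zero_eq)
  qed
  ultimately have "(INF n. \<integral>\<^sup>+w. f n w \<partial>Gam) < e" using \<open>0 < e\<close> by simp
  then show ?thesis using that by (auto simp: INF_less_iff tail)
qed

lemma dense_embedded_by_truncation:
  assumes le: "\<And>(A :: real^'d^'d) g x. eigenvalues_between A alpha g \<Longrightarrow> 0 < g \<Longrightarrow>
      g ^ s' * (x \<bullet> (mpow A r' *v x)) \<le> g / alpha * (g ^ s * (x \<bullet> (mpow A r *v x)))"
    and subset: "Xspace D Gam C gam s' r' \<subseteq> Xspace D Gam C gam s r"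
  shows "dense_embedded D Gam C gam (Xspace D Gam C gam s' r') s r"
  unfolding dense_embedded_def
proof (intro conjI ballI allI impI subset)
  fix v and e :: real assume "v \<in> Xspace D Gam C gam s r" and "0 < e"
  then have v: "admissible D Gam v" and fin: "Xsq D Gam C gam s r v < \<infinity>"
    by (simp_all add: Xspace_def Xnorm_less_top_iff)
  have "0 < ennreal (e^2)" using \<open>0 < e\<close> by simp
  then obtain n where n: "Xsq D Gam C gam s r (cutoff (\<lambda>w. real n < gam w) v) < ennreal (e^2)"
    by (rule Xsq_cutoff_tail_small[OF v fin])
  let ?u = "cutoff (\<lambda>w. gam w \<le> real n) v"
  have "admissible D Gam ?u"
    using gam_measurable by (intro admissible_cutoff[OF v]) measurable
  moreover have "Xsq D Gam C gam s' r' ?u < \<infinity>"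
    using fin by (intro le_less_trans[OF Xsq_truncation_le[OF v le]]) (auto simp: ennreal_mult_less_top)
  ultimately have "?u \<in> Xspace D Gam C gam s' r'"
    by (simp add: Xspace_def Xnorm_less_top_iff)
  moreover have "(\<lambda>x w. v x w - ?u x w) = cutoff (\<lambda>w. real n < gam w) v"
    by (auto simp: cutoff_def fun_eq_iff)
  ultimately show "\<exists>u\<in>Xspace D Gam C gam s' r'. Xnorm D Gam C gam s r (\<lambda>x w. v x w - u x w) < ennreal e"
    using Xnorm_less_if_Xsq_less[OF n \<open>0 < e\<close>] by metis
qed

lemma Xnorm_le_scaled:
  assumes v: "admissible D Gam v" and "0 < c" "0 < d"
    and le: "\<And>(A :: real^'d^'d) g x. eigenvalues_between A alpha g \<Longrightarrow> 0 < g \<Longrightarrow>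
      c^2 * (g ^ s * (x \<bullet> (mpow A r *v x))) \<le> d^2 * (g ^ s' * (x \<bullet> (mpow A r' *v x)))"
  shows "ennreal c * Xnorm D Gam C gam s r v \<le> ennreal d * Xnorm D Gam C gam s' r' v"
  using assms by (intro Xnorm_le_if_Xsq_le Xsq_le_scaled) simp_all

lemma Xnorm_chain:
  assumes "alpha \<le> 1" and v: "admissible D Gam v"
  shows "ennreal (alpha powr (3/2)) * Xnorm D Gam C gam 0 0 v \<le> ennreal alpha * Xnorm D Gam C gam 0 1 v"
    and "ennreal alpha * Xnorm D Gam C gam 0 1 v \<le> Xnorm D Gam C gam 0 2 v"
    and "Xnorm D Gam C gam 0 2 v \<le> Xnorm D Gam C gam 1 1 v"
    and "Xnorm D Gam C gam 1 1 v \<le> Xnorm D Gam C gam 2 0 v"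
proof -
  note lower = quadratic_form_mpow_Suc_bounds(1)[OF _ alpha_pos]
  note upper = quadratic_form_mpow_Suc_bounds(2)[OF _ alpha_pos]
  have "(alpha powr (3/2))^2 = alpha powr (3/2 + 3/2)"
    by (simp only: power2_eq_square powr_add)
  also have "\<dots> = alpha^3"
    using alpha_pos by (simp add: powr_numeral)
  finally have pow: "(alpha powr (3/2))^2 = alpha^3" .
  show "ennreal (alpha powr (3/2)) * Xnorm D Gam C gam 0 0 v \<le> ennreal alpha * Xnorm D Gam C gam 0 1 v"
  proof (rule Xnorm_le_scaled[OF v])
    fix A :: "real^'d^'d" and g x assume "eigenvalues_between A alpha g"
    from lower[OF this, of x 0] alpha_pos
    show "(alpha powr (3/2))^2 * (g^0 * (x \<bullet> (mpow A 0 *v x))) \<le> alpha^2 * (g^0 * (x \<bullet> (mpow A 1 *v x)))"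
      unfolding pow by (simp add: power3_eq_cube power2_eq_square mult.assoc)
  qed (use alpha_pos in simp_all)
  have "ennreal alpha * Xnorm D Gam C gam 0 1 v \<le> ennreal 1 * Xnorm D Gam C gam 0 2 v"
  proof (rule Xnorm_le_scaled[OF v])
    fix A :: "real^'d^'d" and g x assume A: "eigenvalues_between A alpha g"
    have "alpha^2 * (x \<bullet> (mpow A 1 *v x)) \<le> alpha * (x \<bullet> (mpow A 1 *v x))"
      using quadratic_form_mpow_nonneg[OF A alpha_pos, of x 1] alpha_pos \<open>alpha \<le> 1\<close>
      by (simp add: power2_eq_square mult_right_mono mult_left_le_one_le)
    with lower[OF A, of x 1] show "alpha^2 * (g^0 * (x \<bullet> (mpow A 1 *v x))) \<le> 1^2 * (g^0 * (x \<bullet> (mpow A 2 *v x)))"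
      by (simp add: numeral_2_eq_2)
  qed (use alpha_pos in simp_all)
  then show "ennreal alpha * Xnorm D Gam C gam 0 1 v \<le> Xnorm D Gam C gam 0 2 v" by simp
  have "ennreal 1 * Xnorm D Gam C gam 0 2 v \<le> ennreal 1 * Xnorm D Gam C gam 1 1 v"
  proof (rule Xnorm_le_scaled[OF v])
    fix A :: "real^'d^'d" and g x assume "eigenvalues_between A alpha g"
    from upper[OF this, of x 1]
    show "1^2 * (g^0 * (x \<bullet> (mpow A 2 *v x))) \<le> 1^2 * (g^1 * (x \<bullet> (mpow A 1 *v x)))"
      by (simp add: numeral_2_eq_2)
  qed simp_all
  then show "Xnorm D Gam C gam 0 2 v \<le> Xnorm D Gam C gam 1 1 v" by simp
  have "ennreal 1 * Xnorm D Gam C gam 1 1 v \<le> ennreal 1 * Xnorm D Gam C gam 2 0 v"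
  proof (rule Xnorm_le_scaled[OF v])
    fix A :: "real^'d^'d" and g x assume "eigenvalues_between A alpha g" and "0 < g"
    from upper[OF this(1), of x 0] \<open>0 < g\<close>
    show "1^2 * (g^1 * (x \<bullet> (mpow A 1 *v x))) \<le> 1^2 * (g^2 * (x \<bullet> (mpow A 0 *v x)))"
      by (simp add: power2_eq_square)
  qed simp_all
  then show "Xnorm D Gam C gam 1 1 v \<le> Xnorm D Gam C gam 2 0 v" by simp
qed

lemma dense_chain:
  assumes "alpha \<le> 1"
  shows "dense_embedded D Gam C gam (Xspace D Gam C gam 2 0) 1 1"
    and "dense_embedded D Gam C gam (Xspace D Gam C gam 1 1) 0 2"
    and "dense_embedded D Gam C gam (Xspace D Gam C gam 0 2) 0 1"
    and "dense_embedded D Gam C gam (Xspace D Gam C gam 0 1) 0 0"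
proof -
  note chain = Xnorm_chain[OF assms]
  have lower: "g ^ Suc s * (x \<bullet> (mpow A r *v x)) \<le> g / alpha * (g ^ s * (x \<bullet> (mpow A (Suc r) *v x)))"
    if A: "eigenvalues_between A alpha g" and "0 < g" for A :: "real^'d^'d" and g x s r
  proof -
    have "g ^ Suc s * (alpha * (x \<bullet> (mpow A r *v x))) \<le> g ^ Suc s * (x \<bullet> (mpow A (Suc r) *v x))"
      using quadratic_form_mpow_Suc_bounds(1)[OF A alpha_pos] \<open>0 < g\<close> by (simp add: mult_left_mono)
    then show ?thesis using alpha_pos by (simp add: field_simps)
  qed
  have upper: "x \<bullet> (mpow A (Suc r) *v x) \<le> g / alpha * (x \<bullet> (mpow A r *v x))"
    if A: "eigenvalues_between A alpha g" and "0 < g" for A :: "real^'d^'d" and g x r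
  proof -
    have "g \<le> g / alpha" using \<open>0 < g\<close> alpha_pos assms by (simp add: le_divide_eq mult_le_cancel_left1)
    then have "g * (x \<bullet> (mpow A r *v x)) \<le> g / alpha * (x \<bullet> (mpow A r *v x))"
      using quadratic_form_mpow_nonneg[OF A alpha_pos] by (rule mult_right_mono)
    with quadratic_form_mpow_Suc_bounds(2)[OF A alpha_pos] show ?thesis by (rule order_trans)
  qed
  have "Xspace D Gam C gam 2 0 \<subseteq> Xspace D Gam C gam 1 1"
    by (rule Xspace_subset_if_Xnorm_le[where c = 1 and d = 1]) (use chain in simp_all)
  then show "dense_embedded D Gam C gam (Xspace D Gam C gam 2 0) 1 1"
    by (rule dense_embedded_by_truncation[rotated]) (use lower[of _ _ 1 _ 0] in \<open>simp add: numeral_2_eq_2\<close>)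
  have "Xspace D Gam C gam 1 1 \<subseteq> Xspace D Gam C gam 0 2"
    by (rule Xspace_subset_if_Xnorm_le[where c = 1 and d = 1]) (use chain in simp_all)
  then show "dense_embedded D Gam C gam (Xspace D Gam C gam 1 1) 0 2"
    by (rule dense_embedded_by_truncation[rotated]) (use lower[of _ _ 0 _ 1] in \<open>simp add: numeral_2_eq_2\<close>)
  have "Xspace D Gam C gam 0 2 \<subseteq> Xspace D Gam C gam 0 1"
    by (rule Xspace_subset_if_Xnorm_le[where c = alpha and d = 1]) (use chain alpha_pos in simp_all)
  then show "dense_embedded D Gam C gam (Xspace D Gam C gam 0 2) 0 1"
    by (rule dense_embedded_by_truncation[rotated]) (use upper[of _ _ _ 1] in \<open>simp add: numeral_2_eq_2\<close>)
  have "Xspace D Gam C gam 0 1 \<subseteq> Xspace D Gam C gam 0 0"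
    by (rule Xspace_subset_if_Xnorm_le[where c = "alpha powr (3/2)" and d = alpha]) (use chain alpha_pos in simp_all)
  then show "dense_embedded D Gam C gam (Xspace D Gam C gam 0 1) 0 0"
    by (rule dense_embedded_by_truncation[rotated]) (use upper[of _ _ _ 0] in simp)
qed

end

theorem lemma8:
  fixes D :: "(real^'d) set"
    and Gam1 :: "'g::euclidean_space measure" and Gam2 :: "'n::euclidean_space measure"
    and C :: "real^'d \<Rightarrow> ('g \<times> 'n) \<Rightarrow> real^'d^'d"
    and gam :: "('g \<times> 'n) \<Rightarrow> real"
    and alpha :: real
  defines "Gam \<equiv> Gam1 \<Otimes>\<^sub>M Gam2"
  assumes "bounded D" and "open D"
    and "prob_space Gam1" and "sets Gam1 = sets borel"
    and "prob_space Gam2" and "sets Gam2 = sets borel"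
    and "(\<lambda>(x, w). C x w) \<in> borel_measurable (lborel \<Otimes>\<^sub>M Gam)"
    and "gam \<in> borel_measurable Gam" and "\<forall>w. gam w > 0"
    and "alpha > 0" and "alpha \<le> 1"
    and "AE w in Gam. AE x in lborel. x \<in> D \<longrightarrow>
           sym_posdef (C x w) \<and>
           (\<forall>l. is_eigenvalue (C x w) l \<longrightarrow> alpha \<le> l \<and> l \<le> gam w)"
  shows "(\<forall>v. admissible D Gam v \<longrightarrow>
            ennreal (alpha powr (3/2)) * Xnorm D Gam C gam 0 0 v \<le> ennreal alpha * Xnorm D Gam C gam 0 1 v
          \<and> ennreal alpha * Xnorm D Gam C gam 0 1 v \<le> Xnorm D Gam C gam 0 2 v
          \<and> Xnorm D Gam C gam 0 2 v \<le> Xnorm D Gam C gam 1 1 v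
          \<and> Xnorm D Gam C gam 1 1 v \<le> Xnorm D Gam C gam 2 0 v)
       \<and> dense_embedded D Gam C gam (Xspace D Gam C gam 2 0) 1 1
       \<and> dense_embedded D Gam C gam (Xspace D Gam C gam 1 1) 0 2
       \<and> dense_embedded D Gam C gam (Xspace D Gam C gam 0 2) 0 1
       \<and> dense_embedded D Gam C gam (Xspace D Gam C gam 0 1) 0 0"
proof -
  interpret random_elliptic_coefficient D Gam C gam alpha
    using assms(2,3,8-11,13) by unfold_locales
  show ?thesis
    using Xnorm_chain[OF \<open>alpha \<le> 1\<close>] dense_chain[OF \<open>alpha \<le> 1\<close>] by blast
qed

end
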